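(* For every $n\ge1$ and every $t\ge 2n$, there exist informationally complete $t$-doped POVMs on $n$ data qubits.
   Context: A $t$-doped POVM on $n$ data qubits is defined as follows: take $m\ge0$ ancilla qubits in a stabilizer state $\ket\psi\in(\mathbb{C}^2)^{\otimes m}$, a unitary $U$ on $n+m$ qubits implemented by a circuit of Clifford gates (generated by Hadamard, phase $S$ and CNOT gates) together with $t$ gates $T=\mathrm{diag}(1,e^{i\pi/4})$, and a stabilizer basis $\{\ket{\Phi'_b}\}_{b=1}^{2^{n+m}}$ (the common eigenbasis of $n+m$ independent commuting Pauli operators). Its elements are $\mu_b=(I\otimes\bra\psi)U^\dagger\ket{\Phi'_b}\!\bra{\Phi'_b}U(I\otimes\ket\psi)$, operators on $(\mathbb{C}^2)^{\otimes n}$. A stabilizer state is the unique state stabilized by an abelian subgroup of order $2^m$ of the $m$-qubit Pauli group not containing $-I$. The POVM is informationally complete if $\dim\operatorname{span}\{\mu_b\}=4^n$. *)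

theory Defs
  imports "Jordan_Normal_Form.VS_Connect"
begin

text \<open>Kronecker (tensor) product; the first factor is the most significant one.\<close>
definition kron :: "complex mat \<Rightarrow> complex mat \<Rightarrow> complex mat" where
  "kron A B = mat (dim_row A * dim_row B) (dim_col A * dim_col B)
     (\<lambda>(i,j). A $$ (i div dim_row B, j div dim_col B) * B $$ (i mod dim_row B, j mod dim_col B))"

definition adj :: "complex mat \<Rightarrow> complex mat" where
  "adj A = mat (dim_col A) (dim_row A) (\<lambda>(i,j). cnj (A $$ (j,i)))"

definition ket :: "complex vec \<Rightarrow> complex mat" where
  "ket v = mat (dim_vec v) 1 (\<lambda>(i,j). v $ i)"

definition cinner :: "complex vec \<Rightarrow> complex vec \<Rightarrow> complex" where
  "cinner v w = (\<Sum>i<dim_vec v. cnj (v $ i) * w $ i)"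

definition is_state :: "nat \<Rightarrow> complex vec \<Rightarrow> bool" where
  "is_state N v \<longleftrightarrow> v \<in> carrier_vec (2^N) \<and> cinner v v = 1"

definition pauli_X :: "complex mat" where "pauli_X = mat_of_rows_list 2 [[0,1],[1,0]]"
definition pauli_Y :: "complex mat" where "pauli_Y = mat_of_rows_list 2 [[0,-\<i>],[\<i>,0]]"
definition pauli_Z :: "complex mat" where "pauli_Z = mat_of_rows_list 2 [[1,0],[0,-1]]"
definition hadamard :: "complex mat" where
  "hadamard = (1 / complex_of_real (sqrt 2)) \<cdot>\<^sub>m mat_of_rows_list 2 [[1,1],[1,-1]]"
definition phase_S :: "complex mat" where "phase_S = mat_of_rows_list 2 [[1,0],[0,\<i>]]"
definition gate_T :: "complex mat" where "gate_T = mat_of_rows_list 2 [[1,0],[0,cis (pi/4)]]"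
definition proj0 :: "complex mat" where "proj0 = mat_of_rows_list 2 [[1,0],[0,0]]"
definition proj1 :: "complex mat" where "proj1 = mat_of_rows_list 2 [[0,0],[0,1]]"

definition embed :: "nat \<Rightarrow> nat \<Rightarrow> complex mat \<Rightarrow> complex mat" where
  "embed N k G = kron (1\<^sub>m (2^k)) (kron G (1\<^sub>m (2^(N - k - 1))))"

datatype gate = Hg nat | Sg nat | CNOTg nat nat | Tg nat

fun gate_ok :: "nat \<Rightarrow> gate \<Rightarrow> bool" where
  "gate_ok N (Hg k) = (k < N)"
| "gate_ok N (Sg k) = (k < N)"
| "gate_ok N (Tg k) = (k < N)"
| "gate_ok N (CNOTg c d) = (c < N \<and> d < N \<and> c \<noteq> d)"

fun gate_mat :: "nat \<Rightarrow> gate \<Rightarrow> complex mat" where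
  "gate_mat N (Hg k) = embed N k hadamard"
| "gate_mat N (Sg k) = embed N k phase_S"
| "gate_mat N (Tg k) = embed N k gate_T"
| "gate_mat N (CNOTg c d) = embed N c proj0 + embed N c proj1 * embed N d pauli_X"

fun is_T :: "gate \<Rightarrow> bool" where
  "is_T (Tg k) = True"
| "is_T _ = False"

definition circuit_mat :: "nat \<Rightarrow> gate list \<Rightarrow> complex mat" where
  "circuit_mat N gs = foldl (\<lambda>U g. gate_mat N g * U) (1\<^sub>m (2^N)) gs"

definition t_count :: "gate list \<Rightarrow> nat" where
  "t_count gs = length (filter is_T gs)"

definition pauli_group :: "nat \<Rightarrow> complex mat set" where
  "pauli_group N = {(\<i> ^ k) \<cdot>\<^sub>m foldr kron Ps (1\<^sub>m 1) | k Ps.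
      length Ps = N \<and> set Ps \<subseteq> {1\<^sub>m 2, pauli_X, pauli_Y, pauli_Z}}"

definition stabilizer_group :: "nat \<Rightarrow> complex mat set \<Rightarrow> bool" where
  "stabilizer_group N G \<longleftrightarrow>
     G \<subseteq> pauli_group N \<and> 1\<^sub>m (2^N) \<in> G \<and>
     (\<forall>a\<in>G. \<forall>b\<in>G. a * b \<in> G) \<and> (\<forall>a\<in>G. \<exists>b\<in>G. a * b = 1\<^sub>m (2^N)) \<and>
     (\<forall>a\<in>G. \<forall>b\<in>G. a * b = b * a) \<and>
     (-1) \<cdot>\<^sub>m 1\<^sub>m (2^N) \<notin> G \<and> card G = 2^N"

definition stabilizer_state :: "nat \<Rightarrow> complex vec \<Rightarrow> bool" where
  "stabilizer_state N \<psi> \<longleftrightarrow> is_state N \<psi> \<and>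
     (\<exists>G. stabilizer_group N G \<and>
        (\<forall>v\<in>carrier_vec (2^N). (\<forall>g\<in>G. g *\<^sub>v v = v) \<longleftrightarrow> (\<exists>c. v = c \<cdot>\<^sub>v \<psi>)))"

definition stabilizer_basis :: "nat \<Rightarrow> (nat \<Rightarrow> complex vec) \<Rightarrow> bool" where
  "stabilizer_basis N \<Phi> \<longleftrightarrow>
     (\<exists>G. stabilizer_group N G \<and>
        (\<forall>b<2^N. is_state N (\<Phi> b) \<and> (\<forall>g\<in>G. \<exists>c. g *\<^sub>v \<Phi> b = c \<cdot>\<^sub>v \<Phi> b))) \<and>
     (\<forall>b<2^N. \<forall>b'<2^N. b \<noteq> b' \<longrightarrow> cinner (\<Phi> b) (\<Phi> b') = 0)"

text \<open>mu_b = (I \<otimes> <psi|) U^dagger |Phi_b><Phi_b| U (I \<otimes> |psi>) on n data qubits, m ancillas.\<close>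
definition povm_elem :: "nat \<Rightarrow> nat \<Rightarrow> complex vec \<Rightarrow> gate list \<Rightarrow> (nat \<Rightarrow> complex vec) \<Rightarrow> nat \<Rightarrow> complex mat" where
  "povm_elem n m \<psi> gs \<Phi> b =
     (let V = adj (circuit_mat (n+m) gs) * ket (\<Phi> b);
          W = adj (kron (1\<^sub>m (2^n)) (ket \<psi>)) * V
      in W * adj W)"

definition t_doped_povm :: "nat \<Rightarrow> nat \<Rightarrow> (nat \<Rightarrow> complex mat) \<Rightarrow> nat \<Rightarrow> bool" where
  "t_doped_povm n t \<mu> K \<longleftrightarrow>
     (\<exists>m \<psi> gs \<Phi>. K = 2^(n+m) \<and> stabilizer_state m \<psi> \<and>
        (\<forall>g\<in>set gs. gate_ok (n+m) g) \<and> t_count gs = t \<and>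
        stabilizer_basis (n+m) \<Phi> \<and>
        (\<forall>b<K. \<mu> b = povm_elem n m \<psi> gs \<Phi> b))"

definition mat_span_dim :: "nat \<Rightarrow> complex mat set \<Rightarrow> nat" where
  "mat_span_dim d M = vectorspace.dim (class_ring :: complex ring)
     (module.span_vs (class_ring :: complex ring) (module_mat TYPE(complex) d d) M)"

definition informationally_complete :: "nat \<Rightarrow> (nat \<Rightarrow> complex mat) \<Rightarrow> nat \<Rightarrow> bool" where
  "informationally_complete n \<mu> K \<longleftrightarrow> mat_span_dim (2^n) (\<mu> ` {..<K}) = 4^n"

end

theory Submission
  imports Defs
begin

(* Take n ancillas in |0...0>, measure in the computational basis, and couple data qubit j
   with ancilla j by one and the same two-qubit Clifford+T gadget H T H T CNOT H; the remaining
   t - 2n T gates act on an ancilla still in |0>, where they are trivial.  The circuit is then a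
   tensor product over the pairs, so the POVM element of outcome b is the tensor product of the
   four-outcome single-qubit effects nu_c selected by the digits of b.  These four effects span
   all 2x2 matrices (an explicit dual frame exists because the gadget amplitudes
   m0 = (1 + w)/2 and m1 = w (1 - w)/2, w = exp(i pi/4), satisfy |m0|^4 \<noteq> |m1|^4 and
   (cnj m0 m1)^2 \<noteq> (cnj m1 m0)^2), hence their tensor powers span all 2^n x 2^n matrices.
   Both the ancilla state and the measurement basis are stabilized by the group of Z-strings. *)

definition digit :: "nat \<Rightarrow> nat \<Rightarrow> nat" where
  "digit x s = x div 2^s mod 2"

definition set_digit :: "nat \<Rightarrow> nat \<Rightarrow> nat \<Rightarrow> nat" where
  "set_digit x s b = x div (2 * 2^s) * (2 * 2^s) + b * 2^s + x mod 2^s"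

lemma digit_less_2 [simp]: "digit x s < 2"
  by (simp add: digit_def)

lemma mod_double_pow_div: "x mod (2 * 2^s) div 2^s = digit x s"
proof -
  have "x mod (2^s * 2) = 2^s * (x div 2^s mod 2) + x mod 2^s"
    by (rule mod_mult2_eq)
  then show ?thesis
    by (simp add: digit_def mult.commute)
qed

lemma digit_decomp: "x = x div (2 * 2^s) * (2 * 2^s) + digit x s * 2^s + x mod 2^s"
proof -
  have "x mod (2 * 2^s) = digit x s * 2^s + x mod 2^s"
    using mod_mult2_eq[of x "2^s" 2] by (simp add: digit_def mult.commute)
  then show ?thesis
    by (metis add.assoc div_mult_mod_eq)
qed

lemma set_digit_eqs:
  assumes "b < 2"
  shows "set_digit x s b div (2 * 2^s) = x div (2 * 2^s)"
    and "set_digit x s b mod (2 * 2^s) = b * 2^s + x mod 2^s"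
    and "set_digit x s b mod 2^s = x mod 2^s"
    and "digit (set_digit x s b) s = b"
proof -
  let ?p = "2^s :: nat"
  have "b * ?p \<le> ?p"
    using assms by (cases b) auto
  moreover have "x mod ?p < ?p"
    by simp
  ultimately have low: "b * ?p + x mod ?p < 2 * ?p"
    by linarith
  have split: "set_digit x s b = (b * ?p + x mod ?p) + x div (2 * ?p) * (2 * ?p)"
    unfolding set_digit_def by simp
  show "set_digit x s b div (2 * ?p) = x div (2 * ?p)"
    unfolding split using low by simp
  show mod_double: "set_digit x s b mod (2 * ?p) = b * ?p + x mod ?p"
    unfolding split using low by simp
  have "set_digit x s b mod ?p = set_digit x s b mod (2 * ?p) mod ?p"
    by (simp add: mod_mod_cancel)
  then show "set_digit x s b mod ?p = x mod ?p"
    unfolding mod_double by simp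
  have "digit (set_digit x s b) s = set_digit x s b mod (2 * ?p) div ?p"
    by (simp add: mod_double_pow_div)
  then show "digit (set_digit x s b) s = b"
    unfolding mod_double using assms by simp
qed

lemma digit_mod_pow:
  assumes "q < s"
  shows "digit (x mod 2^s) q = digit x q"
proof -
  have "2 * 2^q dvd (2^s :: nat)"
    using assms by (metis Suc_leI le_imp_power_dvd power_Suc)
  then have "x mod 2^s mod (2 * 2^q) div 2^q = x mod (2 * 2^q) div 2^q"
    by (simp add: mod_mod_cancel)
  then show ?thesis
    by (simp add: mod_double_pow_div)
qed

lemma digit_div_double_pow:
  assumes "s < q"
  shows "digit x q = digit (x div (2 * 2^s)) (q - Suc s)"
proof -
  have "(2::nat)^q = 2 * 2^s * 2^(q - Suc s)"
    using assms by (metis Suc_leI le_add_diff_inverse power_Suc power_add)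
  then show ?thesis
    unfolding digit_def by (simp add: div_mult2_eq)
qed

lemma digit_set_digit:
  assumes "b < 2"
  shows "digit (set_digit x s b) q = (if q = s then b else digit x q)"
proof (cases q s rule: linorder_cases)
  case less
  then show ?thesis
    using digit_mod_pow[OF less, of "set_digit x s b"] digit_mod_pow[OF less, of x]
      set_digit_eqs(3)[OF assms] by simp
next
  case equal
  then show ?thesis
    using set_digit_eqs(4)[OF assms] by simp
next
  case greater
  then show ?thesis
    using digit_div_double_pow[OF greater, of "set_digit x s b"] digit_div_double_pow[OF greater, of x]
      set_digit_eqs(1)[OF assms] by simp
qed

lemma set_digit_less:
  assumes "x < 2^N" "s < N" "b < 2"
  shows "set_digit x s b < 2^N"
proof -
  have N: "(2::nat)^N = 2 * 2^s * 2^(N - Suc s)"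
    using assms(2) by (metis Suc_leI le_add_diff_inverse power_Suc power_add)
  have "x div (2 * 2^s) < 2^(N - Suc s)"
    using assms(1) unfolding N by (metis less_mult_imp_div_less mult.commute)
  then have "(x div (2 * 2^s) + 1) * (2 * 2^s) \<le> 2^N"
    unfolding N by (metis Suc_eq_plus1 Suc_leI mult.commute mult_le_mono2)
  moreover have "b * 2^s + x mod 2^s < 2 * 2^s"
    using set_digit_eqs(2)[OF assms(3), of x s] by (metis mod_less_divisor pos2 mult_pos_pos zero_less_power)
  ultimately show ?thesis
    unfolding set_digit_def by (simp add: algebra_simps)
qed

lemma nat_eq_iff_digits_eq:
  assumes "x < 2^K" "y < 2^K"
  shows "x = y \<longleftrightarrow> (\<forall>q<K. digit x q = digit y q)"
  using assms
proof (induction K arbitrary: x y)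
  case (Suc K)
  have "(\<forall>q<Suc K. digit x q = digit y q) \<longleftrightarrow>
      x mod 2 = y mod 2 \<and> (\<forall>q<K. digit (x div 2) q = digit (y div 2) q)"
    by (simp add: All_less_Suc2 digit_def div_mult2_eq)
  also have "\<dots> \<longleftrightarrow> x mod 2 = y mod 2 \<and> x div 2 = y div 2"
    using Suc by (simp add: less_mult_imp_div_less)
  also have "\<dots> \<longleftrightarrow> x = y"
    by (metis div_mult_mod_eq)
  finally show ?case ..
qed simp

lemma digit_add_mult_pow:
  assumes "l < 2^n" "j < n"
  shows "digit (h * 2^n + l) (n + j) = digit h j" "digit (h * 2^n + l) j = digit l j"
proof -
  have "(h * 2^n + l) div 2^(n + j) = (h * 2^n + l) div 2^n div 2^j"
    by (simp add: power_add div_mult2_eq)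
  then show "digit (h * 2^n + l) (n + j) = digit h j"
    using assms by (simp add: digit_def)
  show "digit (h * 2^n + l) j = digit l j"
    using digit_mod_pow[OF assms(2), of "h * 2^n + l"] assms(1) by simp
qed

lemma digit_mult_2_add:
  assumes "u < 2"
  shows "digit (h * 2 + u) (Suc j) = digit h j" "digit (h * 2 + u) 0 = u"
  using assms by (simp_all add: digit_def div_mult2_eq)

lemma kron_dims [simp]:
  "dim_row (kron A B) = dim_row A * dim_row B" "dim_col (kron A B) = dim_col A * dim_col B"
  by (simp_all add: kron_def)

lemma index_kron:
  "i < dim_row A * dim_row B \<Longrightarrow> j < dim_col A * dim_col B \<Longrightarrow>
   kron A B $$ (i,j) = A $$ (i div dim_row B, j div dim_col B) * B $$ (i mod dim_row B, j mod dim_col B)"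
  by (simp add: kron_def)

lemma adj_dims [simp]: "dim_row (adj A) = dim_col A" "dim_col (adj A) = dim_row A"
  by (simp_all add: adj_def)

lemma index_adj [simp]: "i < dim_col A \<Longrightarrow> j < dim_row A \<Longrightarrow> adj A $$ (i,j) = cnj (A $$ (j,i))"
  by (simp add: adj_def)

lemma ket_dims [simp]: "dim_row (ket v) = dim_vec v" "dim_col (ket v) = 1"
  by (simp_all add: ket_def)

lemma index_ket [simp]: "i < dim_vec v \<Longrightarrow> j < 1 \<Longrightarrow> ket v $$ (i,j) = v $ i"
  by (simp add: ket_def)

lemma index_mult_mat_sum:
  "i < dim_row A \<Longrightarrow> j < dim_col B \<Longrightarrow> dim_col A = dim_row B \<Longrightarrow>
   (A * B) $$ (i,j) = (\<Sum>k<dim_col A. A $$ (i,k) * B $$ (k,j))"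
  by (simp add: scalar_prod_def atLeast0LessThan)

lemma sum_lessThan_single:
  assumes "k0 < (K::nat)" "\<And>k. k < K \<Longrightarrow> k \<noteq> k0 \<Longrightarrow> f k = 0"
  shows "(\<Sum>k<K. f k) = f k0"
  using assms by (subst sum.remove[of _ k0]) (auto intro: sum.neutral)

lemma sum_lessThan_2: "(\<Sum>b<(2::nat). f b) = f 0 + f 1"
  by (simp add: numeral_2_eq_2)

lemma sum_lessThan_4: "(\<Sum>c<(4::nat). f c) = f 0 + f 1 + f 2 + f 3"
  by (simp add: numeral_eq_Suc)

lemma prod_indicator:
  "(\<Prod>j<(n::nat). if P j then (1::complex) else 0) = (if \<forall>j<n. P j then 1 else 0)"
  by (induction n) (auto simp: less_Suc_eq)

lemma gates_carrier_mat [simp]: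
  "hadamard \<in> carrier_mat 2 2" "phase_S \<in> carrier_mat 2 2" "gate_T \<in> carrier_mat 2 2"
  "proj0 \<in> carrier_mat 2 2" "proj1 \<in> carrier_mat 2 2" "pauli_X \<in> carrier_mat 2 2"
  by (auto simp: hadamard_def phase_S_def gate_T_def proj0_def proj1_def pauli_X_def
      mat_of_rows_list_def)

lemma pow2_qubit_split: "k < N \<Longrightarrow> (2::nat)^k * (2 * 2^(N - k - 1)) = 2^N"
  by (metis Suc_diff_Suc diff_Suc_1 diff_diff_left le_add_diff_inverse less_imp_le_nat power_Suc
      power_add plus_1_eq_Suc)

lemma embed_carrier_mat: "G \<in> carrier_mat 2 2 \<Longrightarrow> k < N \<Longrightarrow> embed N k G \<in> carrier_mat (2^N) (2^N)"
  unfolding embed_def using pow2_qubit_split[of k N] by auto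

lemma index_embed:
  assumes G: "G \<in> carrier_mat 2 2" and k: "k < N" and x: "x < 2^N" and z: "z < 2^N"
  defines "s \<equiv> N - k - 1"
  shows "embed N k G $$ (x,z) =
     (if x div (2 * 2^s) = z div (2 * 2^s) \<and> x mod 2^s = z mod 2^s
      then G $$ (digit x s, digit z s) else 0)"
proof -
  let ?p = "2^s :: nat"
  have P: "2^k * (2 * ?p) = 2^N"
    unfolding s_def by (rule pow2_qubit_split[OF k])
  have div_less: "x div (2 * ?p) < 2^k" "z div (2 * ?p) < 2^k"
    using x z P by (metis less_mult_imp_div_less)+
  have G2: "dim_row G = 2" "dim_col G = 2"
    using G by auto
  have "embed N k G $$ (x,z) = 1\<^sub>m (2^k) $$ (x div (2 * ?p), z div (2 * ?p)) *
       kron G (1\<^sub>m ?p) $$ (x mod (2 * ?p), z mod (2 * ?p))"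
    unfolding embed_def s_def using x z P G2 pow2_qubit_split[OF k] by (simp add: index_kron)
  also have "kron G (1\<^sub>m ?p) $$ (x mod (2 * ?p), z mod (2 * ?p)) =
      G $$ (digit x s, digit z s) * (if x mod ?p = z mod ?p then 1 else 0)"
    using G2 by (simp add: index_kron mod_double_pow_div mod_mod_cancel del: mod_mult_self2_is_0)
  finally show ?thesis
    using div_less by simp
qed

lemma index_embed_mult:
  assumes G: "G \<in> carrier_mat 2 2" and k: "k < N" and x: "x < 2^N"
    and M: "M \<in> carrier_mat (2^N) nc" and y: "y < nc"
  defines "s \<equiv> N - k - 1"
  shows "(embed N k G * M) $$ (x,y) = (\<Sum>b<2. G $$ (digit x s, b) * M $$ (set_digit x s b, y))"
proof -
  let ?p = "2^s :: nat"
  have sN: "s < N"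
    using k by (simp add: s_def)
  define F where "F z = embed N k G $$ (x,z) * M $$ (z,y)" for z
  have "(embed N k G * M) $$ (x,y) = (\<Sum>z\<in>{0..<2^N}. F z)"
    using embed_carrier_mat[OF G k] M x y by (simp add: scalar_prod_def F_def)
  also have "\<dots> = (\<Sum>z\<in>set_digit x s ` {..<2}. F z)"
  proof (rule sum.mono_neutral_right)
    show "set_digit x s ` {..<2} \<subseteq> {0..<2^N}"
      using set_digit_less[OF x sN] by auto
    show "\<forall>z\<in>{0..<2^N} - set_digit x s ` {..<2}. F z = 0"
    proof
      fix z assume z: "z \<in> {0..<2^N} - set_digit x s ` {..<2}"
      have "\<not> (x div (2 * ?p) = z div (2 * ?p) \<and> x mod ?p = z mod ?p)"
      proof
        assume "x div (2 * ?p) = z div (2 * ?p) \<and> x mod ?p = z mod ?p"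
        then have "z = set_digit x s (digit z s)"
          unfolding set_digit_def using digit_decomp[of z s] by simp
        then show False
          using z by auto
      qed
      then show "F z = 0"
        unfolding F_def using index_embed[OF G k x] z by (auto simp: s_def)
    qed
  qed simp
  also have "\<dots> = (\<Sum>b<2. F (set_digit x s b))"
    by (rule sum.reindex[unfolded comp_def]) (rule inj_onI, metis lessThan_iff set_digit_eqs(4))
  also have "\<dots> = (\<Sum>b<2. G $$ (digit x s, b) * M $$ (set_digit x s b, y))"
  proof (rule sum.cong[OF refl])
    fix b assume "b \<in> {..<2::nat}"
    then have b: "b < 2" by simp
    show "F (set_digit x s b) = G $$ (digit x s, b) * M $$ (set_digit x s b, y)"
      unfolding F_def using index_embed[OF G k x set_digit_less[OF x sN b]] set_digit_eqs[OF b, of x s]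
      by (simp add: s_def)
  qed
  finally show ?thesis .
qed

section \<open>Circuits acting pairwise on data and ancilla qubits\<close>

text \<open>Data qubit j and ancilla qubit j (digits n + j and j of an index on 2n qubits) form pair j,
  with local two-qubit index pair_digits n j x, data qubit first.  Since embed counts
  qubits from the most significant digit, local qubit q of pair j is global qubit
  pair_qubit n j q.\<close>

definition pair_digits :: "nat \<Rightarrow> nat \<Rightarrow> nat \<Rightarrow> nat" where
  "pair_digits n j x = 2 * digit x (n + j) + digit x j"

definition pair_qubit :: "nat \<Rightarrow> nat \<Rightarrow> nat \<Rightarrow> nat" where
  "pair_qubit n j q = (if q = 0 then n - 1 - j else n + n - 1 - j)"

definition pair_tensor :: "nat \<Rightarrow> (nat \<Rightarrow> complex mat) \<Rightarrow> complex mat" where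
  "pair_tensor n A = mat (2^(n+n)) (2^(n+n))
     (\<lambda>(x,y). \<Prod>j<n. A j $$ (pair_digits n j x, pair_digits n j y))"

lemma pair_digits_less_4 [simp]: "pair_digits n j x < 4"
  unfolding pair_digits_def using digit_less_2[of x "n + j"] digit_less_2[of x j] by linarith

lemma pair_digits_eq_iff:
  "pair_digits n j x = pair_digits n j y \<longleftrightarrow> digit x (n + j) = digit y (n + j) \<and> digit x j = digit y j"
  unfolding pair_digits_def
  using digit_less_2[of x "n + j"] digit_less_2[of x j] digit_less_2[of y "n + j"] digit_less_2[of y j]
  by presburger

lemma eq_iff_pair_digits_eq:
  assumes "x < 2^(n+n)" "y < 2^(n+n)"
  shows "x = y \<longleftrightarrow> (\<forall>j<n. pair_digits n j x = pair_digits n j y)"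
proof -
  have "(\<forall>q<n+n. digit x q = digit y q) \<longleftrightarrow>
      (\<forall>j<n. digit x (n + j) = digit y (n + j) \<and> digit x j = digit y j)"
    by (auto, metis add_diff_inverse_nat add_less_cancel_left not_less)
  then show ?thesis
    using nat_eq_iff_digits_eq[OF assms] pair_digits_eq_iff by simp
qed

lemma pair_digits_set_digit:
  assumes "j < n" "q < 2" "b < 2"
  defines "s \<equiv> if q = 0 then n + j else j"
  shows "digit (pair_digits n j x) (1 - q) = digit x s"
    and "set_digit (pair_digits n j x) (1 - q) b = pair_digits n j (set_digit x s b)"
    and "i \<noteq> j \<Longrightarrow> i < n \<Longrightarrow> pair_digits n i (set_digit x s b) = pair_digits n i x"
proof -
  have two_digits: "digit (2 * u + v) 1 = u" "digit (2 * u + v) 0 = v"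
      "set_digit (2 * u + v) 1 b = 2 * b + v" "set_digit (2 * u + v) 0 b = 2 * u + b"
    if "u < 2" "v < 2" for u v
    using that assms(3) by (auto simp: digit_def set_digit_def less_2_cases_iff)
  show "digit (pair_digits n j x) (1 - q) = digit x s"
    "set_digit (pair_digits n j x) (1 - q) b = pair_digits n j (set_digit x s b)"
    using assms two_digits[OF digit_less_2 digit_less_2]
    by (auto simp: pair_digits_def digit_set_digit less_2_cases_iff)
  show "i \<noteq> j \<Longrightarrow> i < n \<Longrightarrow> pair_digits n i (set_digit x s b) = pair_digits n i x"
    using assms by (auto simp: pair_digits_def digit_set_digit)
qed

lemma pair_qubit_bounds:
  assumes "j < n" "q < 2"
  shows "pair_qubit n j q < n + n" "n + n - pair_qubit n j q - 1 = (if q = 0 then n + j else j)"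
  using assms by (auto simp: pair_qubit_def)

lemma pair_tensor_carrier_mat [simp]: "pair_tensor n A \<in> carrier_mat (2^(n+n)) (2^(n+n))"
  by (simp add: pair_tensor_def)

lemma pair_tensor_dims [simp]:
  "dim_row (pair_tensor n A) = 2^(n+n)" "dim_col (pair_tensor n A) = 2^(n+n)"
  by (simp_all add: pair_tensor_def)

lemma index_pair_tensor:
  "x < 2^(n+n) \<Longrightarrow> y < 2^(n+n) \<Longrightarrow>
   pair_tensor n A $$ (x,y) = (\<Prod>j<n. A j $$ (pair_digits n j x, pair_digits n j y))"
  by (simp add: pair_tensor_def)

lemma index_pair_tensor_update:
  assumes "j < n" "x < 2^(n+n)" "y < 2^(n+n)"
  shows "pair_tensor n (A(j := B)) $$ (x,y) = B $$ (pair_digits n j x, pair_digits n j y) *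
    (\<Prod>i\<in>{..<n} - {j}. A i $$ (pair_digits n i x, pair_digits n i y))"
  using assms by (simp add: index_pair_tensor prod.remove[of _ j])

lemma pair_tensor_update_add:
  assumes "j < n" "B \<in> carrier_mat 4 4" "C \<in> carrier_mat 4 4"
  shows "pair_tensor n (A(j := B)) + pair_tensor n (A(j := C)) = pair_tensor n (A(j := B + C))"
  by (rule eq_matI) (use assms in \<open>auto simp: index_pair_tensor_update distrib_right\<close>)

lemma pair_tensor_one: "pair_tensor n (\<lambda>_. 1\<^sub>m 4) = 1\<^sub>m (2^(n+n))"
proof (rule eq_matI)
  fix x y assume "x < dim_row (1\<^sub>m (2^(n+n)) :: complex mat)" "y < dim_col (1\<^sub>m (2^(n+n)) :: complex mat)"
  then have x: "x < 2^(n+n)" and y: "y < 2^(n+n)"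
    by auto
  have "pair_tensor n (\<lambda>_. 1\<^sub>m 4) $$ (x,y) = (\<Prod>j<n. if pair_digits n j x = pair_digits n j y then 1 else 0)"
    unfolding index_pair_tensor[OF x y] by (rule prod.cong) auto
  also have "\<dots> = 1\<^sub>m (2^(n+n)) $$ (x,y)"
    unfolding prod_indicator eq_iff_pair_digits_eq[OF x y, symmetric] using x y by simp
  finally show "pair_tensor n (\<lambda>_. 1\<^sub>m 4) $$ (x,y) = 1\<^sub>m (2^(n+n)) $$ (x,y)" .
qed auto

lemma embed_mult_pair_tensor:
  assumes j: "j < n" and q: "q < 2" and G: "G \<in> carrier_mat 2 2" and A: "A j \<in> carrier_mat 4 4"
  shows "embed (n+n) (pair_qubit n j q) G * pair_tensor n A = pair_tensor n (A(j := embed 2 q G * A j))"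
proof (rule eq_matI)
  let ?k = "pair_qubit n j q"
  let ?s = "if q = 0 then n + j else j"
  let ?d = "pair_digits n j"
  have k: "?k < n + n" and s: "n + n - ?k - 1 = ?s"
    using pair_qubit_bounds[OF j q] by simp_all
  fix x y assume "x < dim_row (pair_tensor n (A(j := embed 2 q G * A j)))"
    "y < dim_col (pair_tensor n (A(j := embed 2 q G * A j)))"
  then have x: "x < 2^(n+n)" and y: "y < 2^(n+n)"
    by auto
  define R where "R = (\<Prod>i\<in>{..<n} - {j}. A i $$ (pair_digits n i x, pair_digits n i y))"
  have "(embed (n+n) ?k G * pair_tensor n A) $$ (x,y) =
      (\<Sum>b<2. G $$ (digit x ?s, b) * pair_tensor n A $$ (set_digit x ?s b, y))"
    using index_embed_mult[OF G k x pair_tensor_carrier_mat y] by (simp only: s)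
  also have "\<dots> = (\<Sum>b<2. G $$ (digit x ?s, b) * A j $$ (?d (set_digit x ?s b), ?d y)) * R"
  proof -
    have "pair_tensor n A $$ (set_digit x ?s b, y) = A j $$ (?d (set_digit x ?s b), ?d y) * R"
      if b: "b < 2" for b
    proof -
      have "set_digit x ?s b < 2^(n+n)"
        using set_digit_less[OF x _ b] j by simp
      then show ?thesis
        using index_pair_tensor_update[of j n _ y A "A j"] j y pair_digits_set_digit(3)[OF j q b]
        unfolding R_def by (auto intro!: prod.cong)
    qed
    then show ?thesis
      by (simp add: sum_distrib_right mult.assoc)
  qed
  also have "(\<Sum>b<2. G $$ (digit x ?s, b) * A j $$ (?d (set_digit x ?s b), ?d y)) =
      (embed 2 q G * A j) $$ (?d x, ?d y)"
  proof -
    have "(2::nat) - q - 1 = 1 - q"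
      by simp
    then have "(embed 2 q G * A j) $$ (?d x, ?d y) =
        (\<Sum>b<2. G $$ (digit (?d x) (1 - q), b) * A j $$ (set_digit (?d x) (1 - q) b, ?d y))"
      using index_embed_mult[of G q 2 "?d x" "A j" 4 "?d y"] G q A by simp
    also have "\<dots> = (\<Sum>b<2. G $$ (digit x ?s, b) * A j $$ (?d (set_digit x ?s b), ?d y))"
    proof (rule sum.cong[OF refl])
      fix b assume "b \<in> {..<2::nat}"
      then have b: "b < 2" by simp
      show "G $$ (digit (?d x) (1 - q), b) * A j $$ (set_digit (?d x) (1 - q) b, ?d y) =
          G $$ (digit x ?s, b) * A j $$ (?d (set_digit x ?s b), ?d y)"
        unfolding pair_digits_set_digit(1,2)[OF j q b] ..
    qed
    finally show ?thesis ..
  qed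
  also have "\<dots> * R = pair_tensor n (A(j := embed 2 q G * A j)) $$ (x,y)"
    unfolding index_pair_tensor_update[OF j x y] R_def ..
  finally show "(embed (n+n) ?k G * pair_tensor n A) $$ (x,y) = pair_tensor n (A(j := embed 2 q G * A j)) $$ (x,y)" .
qed (use embed_carrier_mat[OF G pair_qubit_bounds(1)[OF j q]] in auto)

fun lift_gate :: "nat \<Rightarrow> nat \<Rightarrow> gate \<Rightarrow> gate" where
  "lift_gate n j (Hg q) = Hg (pair_qubit n j q)"
| "lift_gate n j (Sg q) = Sg (pair_qubit n j q)"
| "lift_gate n j (Tg q) = Tg (pair_qubit n j q)"
| "lift_gate n j (CNOTg c d) = CNOTg (pair_qubit n j c) (pair_qubit n j d)"

definition lift_circuit :: "nat \<Rightarrow> (nat \<Rightarrow> gate list) \<Rightarrow> nat \<Rightarrow> gate list" where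
  "lift_circuit n gs k = concat (map (\<lambda>j. map (lift_gate n j) (gs j)) [0..<k])"

lemma embed_2_carrier_mat: "G \<in> carrier_mat 2 2 \<Longrightarrow> q < 2 \<Longrightarrow> embed 2 q G \<in> carrier_mat 4 4"
  using embed_carrier_mat[of G q 2] by simp

lemma gate_mat_2_carrier_mat: "gate_ok 2 g \<Longrightarrow> gate_mat 2 g \<in> carrier_mat 4 4"
  by (cases g) (auto intro!: embed_2_carrier_mat add_carrier_mat mult_carrier_mat)

lemma gate_ok_lift_gate:
  assumes "gate_ok 2 g" "j < n"
  shows "gate_ok (n+n) (lift_gate n j g)"
  using assms by (cases g) (auto simp: pair_qubit_def)

lemma is_T_lift_gate: "is_T (lift_gate n j g) = is_T g"
  by (cases g) auto

lemma lift_gate_mult_pair_tensor: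
  assumes j: "j < n" and g: "gate_ok 2 g" and A: "A j \<in> carrier_mat 4 4"
  shows "gate_mat (n+n) (lift_gate n j g) * pair_tensor n A = pair_tensor n (A(j := gate_mat 2 g * A j))"
proof (cases g)
  case (CNOTg c d)
  have c: "c < 2" and d: "d < 2"
    using g CNOTg by auto
  let ?N = "n + n" and ?P = "pair_tensor n A"
  let ?E0 = "embed ?N (pair_qubit n j c) proj0" and ?E1 = "embed ?N (pair_qubit n j c) proj1"
    and ?EX = "embed ?N (pair_qubit n j d) pauli_X"
  let ?e0 = "embed 2 c proj0" and ?e1 = "embed 2 c proj1" and ?eX = "embed 2 d pauli_X"
  have E: "?E0 \<in> carrier_mat (2^?N) (2^?N)" "?E1 \<in> carrier_mat (2^?N) (2^?N)"
    "?EX \<in> carrier_mat (2^?N) (2^?N)"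
    using embed_carrier_mat pair_qubit_bounds(1)[OF j c] pair_qubit_bounds(1)[OF j d] by simp_all
  have e: "?e0 \<in> carrier_mat 4 4" "?e1 \<in> carrier_mat 4 4" "?eX \<in> carrier_mat 4 4"
    using embed_2_carrier_mat c d by auto
  have "gate_mat ?N (lift_gate n j g) * ?P = ?E0 * ?P + ?E1 * (?EX * ?P)"
    using CNOTg add_mult_distrib_mat[OF E(1) mult_carrier_mat[OF E(2,3)] pair_tensor_carrier_mat]
      assoc_mult_mat[OF E(2,3) pair_tensor_carrier_mat] by simp
  also have "\<dots> = pair_tensor n (A(j := ?e0 * A j)) + pair_tensor n (A(j := ?e1 * (?eX * A j)))"
    using embed_mult_pair_tensor[of j n c proj0 A] embed_mult_pair_tensor[of j n d pauli_X A]
      embed_mult_pair_tensor[of j n c proj1 "A(j := ?eX * A j)"] j c d e A by simp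
  also have "\<dots> = pair_tensor n (A(j := ?e0 * A j + ?e1 * (?eX * A j)))"
    using pair_tensor_update_add[OF j] e A by simp
  also have "?e0 * A j + ?e1 * (?eX * A j) = gate_mat 2 g * A j"
    using CNOTg add_mult_distrib_mat[OF e(1) mult_carrier_mat[OF e(2,3)] A]
      assoc_mult_mat[OF e(2,3) A] by simp
  finally show ?thesis .
qed (use assms embed_mult_pair_tensor[of j n _ _ A] in auto)

lemma lift_gates_pair_tensor:
  assumes "j < n" "\<forall>g\<in>set gs. gate_ok 2 g" "A j \<in> carrier_mat 4 4"
  shows "foldl (\<lambda>U g. gate_mat (n+n) g * U) (pair_tensor n A) (map (lift_gate n j) gs) =
    pair_tensor n (A(j := foldl (\<lambda>U g. gate_mat 2 g * U) (A j) gs))"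
  using assms(2,3)
proof (induction gs arbitrary: A)
  case (Cons g gs)
  have "gate_mat 2 g * A j \<in> carrier_mat 4 4"
    using Cons.prems by (auto intro: mult_carrier_mat[OF gate_mat_2_carrier_mat])
  then show ?case
    using Cons.prems Cons.IH[of "A(j := gate_mat 2 g * A j)"] lift_gate_mult_pair_tensor[OF assms(1), of g A]
    by (simp add: fun_upd_same del: fun_upd_apply)
qed simp

lemma lift_circuit_pair_tensor:
  assumes "k \<le> n" "\<forall>j. \<forall>g\<in>set (gs j). gate_ok 2 g" "\<forall>i. A i \<in> carrier_mat 4 4"
  shows "foldl (\<lambda>U g. gate_mat (n+n) g * U) (pair_tensor n A) (lift_circuit n gs k) =
     pair_tensor n (\<lambda>i. if i < k then foldl (\<lambda>U g. gate_mat 2 g * U) (A i) (gs i) else A i)"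
  using assms(1)
proof (induction k)
  case 0
  then show ?case
    by (simp add: lift_circuit_def)
next
  case (Suc k)
  let ?A = "\<lambda>i. if i < k then foldl (\<lambda>U g. gate_mat 2 g * U) (A i) (gs i) else A i"
  have "foldl (\<lambda>U g. gate_mat (n+n) g * U) (pair_tensor n A) (lift_circuit n gs (Suc k)) =
      foldl (\<lambda>U g. gate_mat (n+n) g * U) (pair_tensor n ?A) (map (lift_gate n k) (gs k))"
    using Suc by (simp add: lift_circuit_def)
  also have "\<dots> = pair_tensor n (?A(k := foldl (\<lambda>U g. gate_mat 2 g * U) (?A k) (gs k)))"
    using lift_gates_pair_tensor[of k n "gs k" ?A] Suc.prems assms(2,3) by simp
  also have "?A(k := foldl (\<lambda>U g. gate_mat 2 g * U) (?A k) (gs k)) =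
      (\<lambda>i. if i < Suc k then foldl (\<lambda>U g. gate_mat 2 g * U) (A i) (gs i) else A i)"
    by (auto simp: fun_eq_iff less_Suc_eq)
  finally show ?case .
qed

lemma circuit_mat_lift_circuit:
  assumes "\<forall>j. \<forall>g\<in>set (gs j). gate_ok 2 g"
  shows "circuit_mat (n+n) (lift_circuit n gs n) =
    pair_tensor n (\<lambda>j. if j < n then circuit_mat 2 (gs j) else 1\<^sub>m 4)"
proof -
  have four: "(2::nat)^2 = 4"
    by simp
  show ?thesis
    using lift_circuit_pair_tensor[of n n gs "\<lambda>_. 1\<^sub>m 4"] assms
    unfolding circuit_mat_def pair_tensor_one[symmetric] four by simp
qed

lemma gate_ok_lift_circuit:
  assumes "\<And>j. \<forall>g\<in>set (gs j). gate_ok 2 g" "k \<le> n"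
  shows "\<forall>g\<in>set (lift_circuit n gs k). gate_ok (n+n) g"
  using assms unfolding lift_circuit_def by (auto intro: gate_ok_lift_gate)

lemma t_count_lift_circuit: "t_count (lift_circuit n gs k) = (\<Sum>j<k. t_count (gs j))"
  by (induction k) (simp_all add: lift_circuit_def t_count_def is_T_lift_gate comp_def)

section \<open>Simulating two-qubit circuits column by column\<close>

text \<open>A column of a two-qubit operator is represented by a function on the indices 0..3; its
  values at larger indices are junk, which is why the congruence rules only compare below 4.\<close>

definition apply_1q :: "complex mat \<Rightarrow> nat \<Rightarrow> (nat \<Rightarrow> complex) \<Rightarrow> nat \<Rightarrow> complex" where
  "apply_1q G s f c = (\<Sum>b<2. G $$ (digit c s, b) * f (set_digit c s b))"

fun apply_gate :: "gate \<Rightarrow> (nat \<Rightarrow> complex) \<Rightarrow> nat \<Rightarrow> complex" where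
  "apply_gate (Hg q) f = apply_1q hadamard (1 - q) f"
| "apply_gate (Sg q) f = apply_1q phase_S (1 - q) f"
| "apply_gate (Tg q) f = apply_1q gate_T (1 - q) f"
| "apply_gate (CNOTg c d) f =
     (\<lambda>x. apply_1q proj0 (1 - c) f x + apply_1q proj1 (1 - c) (apply_1q pauli_X (1 - d) f) x)"

fun apply_gates :: "gate list \<Rightarrow> (nat \<Rightarrow> complex) \<Rightarrow> nat \<Rightarrow> complex" where
  "apply_gates [] f = f"
| "apply_gates (g # gs) f = apply_gates gs (apply_gate g f)"

lemma apply_gates_append: "apply_gates (gs @ hs) f = apply_gates hs (apply_gates gs f)"
  by (induction gs arbitrary: f) auto

lemma apply_1q_cong:
  "(\<And>c. c < 4 \<Longrightarrow> f c = f' c) \<Longrightarrow> s < 2 \<Longrightarrow> c < 4 \<Longrightarrow> apply_1q G s f c = apply_1q G s f' c"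
  unfolding apply_1q_def using set_digit_less[of c 2 s] by (auto intro!: sum.cong)

lemma apply_gate_cong:
  assumes f: "\<And>c. c < 4 \<Longrightarrow> f c = f' c" and c: "c < 4"
  shows "apply_gate g f c = apply_gate g f' c"
proof (cases g)
  case (CNOTg a d)
  have X: "\<And>c'. c' < 4 \<Longrightarrow> apply_1q pauli_X (1 - d) f c' = apply_1q pauli_X (1 - d) f' c'"
    using apply_1q_cong[OF f] by simp
  show ?thesis
    using CNOTg apply_1q_cong[OF f _ c] apply_1q_cong[OF X _ c] by simp
qed (use apply_1q_cong[OF f _ c] in simp_all)

lemma apply_gates_cong:
  assumes "\<And>c. c < 4 \<Longrightarrow> f c = f' c" "c < 4"
  shows "apply_gates gs f c = apply_gates gs f' c"
  using assms
proof (induction gs arbitrary: f f')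
  case (Cons g gs)
  have "apply_gates gs (apply_gate g f) c = apply_gates gs (apply_gate g f') c"
    by (rule Cons.IH) (use apply_gate_cong[OF Cons.prems(1)] Cons.prems(2) in simp_all)
  then show ?case
    by simp
qed simp

lemma index_embed_2_mult:
  assumes "G \<in> carrier_mat 2 2" "q < 2" "M \<in> carrier_mat 4 4" "c < 4" "w < 4"
  shows "(embed 2 q G * M) $$ (c, w) = apply_1q G (1 - q) (\<lambda>c. M $$ (c, w)) c"
  using index_embed_mult[of G q 2 c M 4 w] assms by (simp add: apply_1q_def)

lemma index_gate_mat_2_mult:
  assumes g: "gate_ok 2 g" and M: "M \<in> carrier_mat 4 4" and c: "c < 4" and w: "w < 4"
  shows "(gate_mat 2 g * M) $$ (c, w) = apply_gate g (\<lambda>c. M $$ (c, w)) c"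
proof (cases g)
  case (CNOTg a d)
  have a: "a < 2" and d: "d < 2"
    using g CNOTg by auto
  have e: "embed 2 a proj0 \<in> carrier_mat 4 4" "embed 2 a proj1 \<in> carrier_mat 4 4"
    "embed 2 d pauli_X \<in> carrier_mat 4 4"
    using embed_2_carrier_mat a d by auto
  have "(gate_mat 2 g * M) $$ (c, w) =
      (embed 2 a proj0 * M) $$ (c,w) + (embed 2 a proj1 * (embed 2 d pauli_X * M)) $$ (c,w)"
    using CNOTg add_mult_distrib_mat[OF e(1) mult_carrier_mat[OF e(2,3)] M]
      assoc_mult_mat[OF e(2,3) M] c w e M by simp
  also have "\<dots> = apply_1q proj0 (1 - a) (\<lambda>c. M $$ (c, w)) c +
      apply_1q proj1 (1 - a) (apply_1q pauli_X (1 - d) (\<lambda>c. M $$ (c, w))) c"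
  proof -
    have "\<And>c'. c' < 4 \<Longrightarrow> (embed 2 d pauli_X * M) $$ (c', w) =
        apply_1q pauli_X (1 - d) (\<lambda>c. M $$ (c, w)) c'"
      using index_embed_2_mult[OF _ d M _ w] by simp
    then have "apply_1q proj1 (1 - a) (\<lambda>c. (embed 2 d pauli_X * M) $$ (c, w)) c =
        apply_1q proj1 (1 - a) (apply_1q pauli_X (1 - d) (\<lambda>c. M $$ (c, w))) c"
      by (rule apply_1q_cong) (use c in simp_all)
    then show ?thesis
      using index_embed_2_mult[OF _ a(1) M c w, of proj0]
        index_embed_2_mult[OF _ a(1) mult_carrier_mat[OF e(3) M] c w, of proj1] by simp
  qed
  finally show ?thesis
    using CNOTg by simp
qed (use g index_embed_2_mult[OF _ _ M c w] in simp_all)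

lemma index_gates_2:
  assumes "\<forall>g\<in>set gs. gate_ok 2 g" "M \<in> carrier_mat 4 4" "c < 4" "w < 4"
  shows "foldl (\<lambda>U g. gate_mat 2 g * U) M gs $$ (c, w) = apply_gates gs (\<lambda>c. M $$ (c, w)) c"
  using assms
proof (induction gs arbitrary: M c)
  case (Cons g gs)
  have gM: "gate_mat 2 g * M \<in> carrier_mat 4 4"
    using Cons.prems by (auto intro: mult_carrier_mat[OF gate_mat_2_carrier_mat])
  have "foldl (\<lambda>U g. gate_mat 2 g * U) M (g # gs) $$ (c, w) =
      apply_gates gs (\<lambda>c. (gate_mat 2 g * M) $$ (c, w)) c"
    using Cons.IH[OF _ gM] Cons.prems by simp
  also have "\<dots> = apply_gates (g # gs) (\<lambda>c. M $$ (c, w)) c"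
    using Cons.prems index_gate_mat_2_mult[of g M _ w] by (auto intro: apply_gates_cong)
  finally show ?case .
qed simp

lemma index_circuit_mat_2:
  assumes "\<forall>g\<in>set gs. gate_ok 2 g" "c < 4" "w < 4"
  shows "circuit_mat 2 gs $$ (c, w) = apply_gates gs (\<lambda>c. if c = w then 1 else 0) c"
proof -
  have four: "(2::nat)^2 = 4"
    by simp
  have "circuit_mat 2 gs $$ (c, w) = apply_gates gs (\<lambda>c. (1\<^sub>m 4 :: complex mat) $$ (c, w)) c"
    unfolding circuit_mat_def four using index_gates_2[OF assms(1) _ assms(2,3)] by simp
  also have "\<dots> = apply_gates gs (\<lambda>c. if c = w then 1 else 0) c"
    using assms by (auto intro: apply_gates_cong)
  finally show ?thesis .
qed

section \<open>The two-qubit gadget\<close>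

definition inv_sqrt2 :: complex where
  "inv_sqrt2 = 1 / complex_of_real (sqrt 2)"

definition omega :: complex where
  "omega = cis (pi / 4)"

definition gadget :: "gate list" where
  "gadget = [Hg 1, Tg 1, Hg 1, Tg 1, CNOTg 0 1, Hg 0]"

text \<open>The T gates beyond the 2n of the gadgets are placed on the ancilla of pair 0 before its
  gadget; they act on the ancilla state |0> and hence trivially.\<close>

definition padded_gadget :: "nat \<Rightarrow> nat \<Rightarrow> gate list" where
  "padded_gadget r j = (if j = 0 then replicate r (Tg 1) else []) @ gadget"

definition gadget_amp :: "nat \<Rightarrow> complex" where
  "gadget_amp a = (if a = 0 then inv_sqrt2 * (inv_sqrt2 + inv_sqrt2 * omega)
     else omega * (inv_sqrt2 * (inv_sqrt2 - inv_sqrt2 * omega)))"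

definition gadget_col :: "nat \<Rightarrow> nat \<Rightarrow> complex" where
  "gadget_col c x = inv_sqrt2 * (-1)^(x * (c div 2)) * gadget_amp ((c + x) mod 2)"

lemma gate_entries:
  "hadamard $$ (0,0) = inv_sqrt2" "hadamard $$ (0,1) = inv_sqrt2"
  "hadamard $$ (1,0) = inv_sqrt2" "hadamard $$ (1,1) = - inv_sqrt2"
  "gate_T $$ (0,0) = 1" "gate_T $$ (0,1) = 0" "gate_T $$ (1,0) = 0" "gate_T $$ (1,1) = omega"
  "proj0 $$ (0,0) = 1" "proj0 $$ (0,1) = 0" "proj0 $$ (1,0) = 0" "proj0 $$ (1,1) = 0"
  "proj1 $$ (0,0) = 0" "proj1 $$ (0,1) = 0" "proj1 $$ (1,0) = 0" "proj1 $$ (1,1) = 1"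
  "pauli_X $$ (0,0) = 0" "pauli_X $$ (0,1) = 1" "pauli_X $$ (1,0) = 1" "pauli_X $$ (1,1) = 0"
  by (simp_all add: hadamard_def gate_T_def proj0_def proj1_def pauli_X_def mat_of_rows_list_def
      inv_sqrt2_def omega_def)

lemmas gate_entries_Suc_0 = gate_entries[unfolded One_nat_def]

lemma apply_gates_gadget:
  assumes "c < 4" "x < 2"
  shows "apply_gates gadget (\<lambda>c. if c = 2 * x then 1 else 0) c = gadget_col c x"
proof -
  have "\<forall>c\<in>{0,1,2,3}. \<forall>x\<in>{0,1}.
      apply_gates gadget (\<lambda>c. if c = 2 * x then 1 else 0) c = gadget_col c x"
    unfolding gadget_def
    by (simp add: apply_1q_def sum_lessThan_2 digit_def set_digit_def gate_entries gate_entries_Suc_0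
        gadget_col_def gadget_amp_def) (simp add: algebra_simps)
  moreover have "c \<in> {0,1,2,3}" "x \<in> {0,1}"
    using assms by auto
  ultimately show ?thesis
    by blast
qed

lemma apply_gates_T_ancilla:
  assumes "c < 4" "x < 2"
  shows "apply_gates (replicate r (Tg 1)) (\<lambda>c. if c = 2 * x then 1 else 0) c = (if c = 2 * x then 1 else 0)"
  using assms(1)
proof (induction r arbitrary: c)
  case (Suc r)
  have T: "apply_gate (Tg 1) (\<lambda>c. if c = 2 * x then 1 else 0) c' = (if c' = 2 * x then 1 else 0)"
    if "c' < 4" for c'
  proof -
    have "c' \<in> {0,1,2,3}" "x \<in> {0,1}"
      using that assms(2) by auto
    then show ?thesis
      by (auto simp: apply_1q_def sum_lessThan_2 digit_def set_digit_def gate_entries gate_entries_Suc_0)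
  qed
  show ?case
    using Suc apply_gates_cong[where gs = "replicate r (Tg 1)", OF T Suc.prems]
    by simp
qed simp

lemma index_padded_gadget:
  assumes c: "c < 4" and x: "x < 2"
  shows "circuit_mat 2 (padded_gadget r j) $$ (c, 2 * x) = gadget_col c x"
proof -
  let ?pad = "if j = 0 then replicate r (Tg 1) else []"
  have "circuit_mat 2 (padded_gadget r j) $$ (c, 2 * x) =
      apply_gates gadget (apply_gates ?pad (\<lambda>c. if c = 2 * x then 1 else 0)) c"
    using index_circuit_mat_2[of "padded_gadget r j" c "2 * x"] assms
    by (simp add: padded_gadget_def gadget_def apply_gates_append)
  also have "\<dots> = apply_gates gadget (\<lambda>c. if c = 2 * x then 1 else 0) c"
    using apply_gates_T_ancilla[OF _ x] by (intro apply_gates_cong[OF _ c]) simp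
  also have "\<dots> = gadget_col c x"
    by (rule apply_gates_gadget[OF c x])
  finally show ?thesis .
qed

lemma t_count_padded_gadget: "t_count (padded_gadget r j) = (if j = 0 then r else 0) + 2"
  by (simp add: t_count_def padded_gadget_def gadget_def)

lemma gate_ok_padded_gadget: "\<forall>g\<in>set (padded_gadget r j). gate_ok 2 g"
  by (auto simp: padded_gadget_def gadget_def)

section \<open>The single-pair POVM is informationally complete\<close>

text \<open>The effects of outcomes c and c + 2 differ only in the sign of their off-diagonal
  entries, so their sums and differences isolate the diagonal and the off-diagonal part;
  solving the resulting 2x2 systems gives the dual coefficients below, with determinants
  P^2 - Q^2 and Z^2 - W^2.\<close>

definition effect_entry :: "complex \<Rightarrow> complex \<Rightarrow> complex \<Rightarrow> complex \<Rightarrow> nat \<Rightarrow> nat \<Rightarrow> nat \<Rightarrow> complex" where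
  "effect_entry P Q Z W c i j = 1/2 * (-1)^((i + j) * (c div 2)) *
     (if i = j then (if (c mod 2 = 0) = (i = 0) then P else Q)
      else (if (c mod 2 = 0) = (i = 0) then Z else W))"

definition dual_num :: "complex \<Rightarrow> complex \<Rightarrow> complex \<Rightarrow> complex \<Rightarrow> nat \<Rightarrow> nat \<Rightarrow> nat \<Rightarrow> complex" where
  "dual_num P Q Z W x y c =
     (if x = 0 \<and> y = 0 then (if c mod 2 = 0 then P else - Q)
      else if x = 1 \<and> y = 1 then (if c mod 2 = 0 then - Q else P)
      else if x = 0 \<and> y = 1 then (-1)^(c div 2) * (if c mod 2 = 0 then Z else - W)
      else (-1)^(c div 2) * (if c mod 2 = 0 then - W else Z))"

definition dual_det :: "complex \<Rightarrow> complex \<Rightarrow> complex \<Rightarrow> complex \<Rightarrow> nat \<Rightarrow> nat \<Rightarrow> complex" where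
  "dual_det P Q Z W x y = (if x = y then P * P - Q * Q else Z * Z - W * W)"

lemma dual_num_effect_entry_sum:
  assumes "x < 2" "y < 2" "i < 2" "j < 2"
  shows "(\<Sum>c<4. dual_num P Q Z W x y c * effect_entry P Q Z W c i j) =
    (if i = x \<and> j = y then dual_det P Q Z W x y else 0)"
proof -
  have "\<forall>x\<in>{0,1}. \<forall>y\<in>{0,1}. \<forall>i\<in>{0,1}. \<forall>j\<in>{0,1}.
      (\<Sum>c<4. dual_num P Q Z W x y c * effect_entry P Q Z W c i j) =
      (if i = x \<and> j = y then dual_det P Q Z W x y else 0)"
    by (simp add: sum_lessThan_4 dual_num_def effect_entry_def dual_det_def algebra_simps)
  moreover have "x \<in> {0,1}" "y \<in> {0,1}" "i \<in> {0,1}" "j \<in> {0,1}"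
    using assms by auto
  ultimately show ?thesis
    by blast
qed

lemma dual_effect_entry_sum:
  assumes "P * P - Q * Q \<noteq> 0" "Z * Z - W * W \<noteq> 0" "x < 2" "y < 2" "i < 2" "j < 2"
  shows "(\<Sum>c<4. dual_num P Q Z W x y c / dual_det P Q Z W x y * effect_entry P Q Z W c i j) =
    (if i = x \<and> j = y then 1 else 0)"
proof -
  have "dual_det P Q Z W x y \<noteq> 0"
    using assms(1,2) by (simp add: dual_det_def)
  moreover have "(\<Sum>c<4. dual_num P Q Z W x y c / dual_det P Q Z W x y * effect_entry P Q Z W c i j) =
      (\<Sum>c<4. dual_num P Q Z W x y c * effect_entry P Q Z W c i j) / dual_det P Q Z W x y"
    by (simp add: sum_divide_distrib)
  ultimately show ?thesis
    unfolding dual_num_effect_entry_sum[OF assms(3-6)] by simp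
qed

lemma inv_sqrt2_sq: "inv_sqrt2 * inv_sqrt2 = 1/2"
proof -
  have "sqrt 2 * sqrt 2 = (2::real)"
    by simp
  then have "complex_of_real (sqrt 2) * complex_of_real (sqrt 2) = 2"
    by (metis of_real_mult of_real_numeral)
  then show ?thesis
    unfolding inv_sqrt2_def by (simp add: field_simps)
qed

lemma cnj_omega_mult: "cnj omega * omega = 1"
  unfolding omega_def by (simp add: cis_cnj cis_mult)

lemma omega_sq: "omega * omega = \<i>"
  unfolding omega_def by (simp add: cis_mult)

lemma omega_add_cnj_neq_0: "omega + cnj omega \<noteq> 0"
proof
  assume "omega + cnj omega = 0"
  then have "Re (omega + cnj omega) = 0"
    by (simp only: zero_complex.sel)
  moreover have "Re (omega + cnj omega) = 2 * cos (pi / 4)"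
    unfolding omega_def by simp
  ultimately show False
    by (simp add: cos_45)
qed

lemma gadget_amp_0: "gadget_amp 0 = (1 + omega) / 2"
proof -
  have "gadget_amp 0 = inv_sqrt2 * inv_sqrt2 * (1 + omega)"
    by (simp add: gadget_amp_def algebra_simps)
  then show ?thesis
    by (simp add: inv_sqrt2_sq)
qed

lemma gadget_amp_1: "gadget_amp 1 = omega * (1 - omega) / 2"
proof -
  have "gadget_amp 1 = inv_sqrt2 * inv_sqrt2 * (omega * (1 - omega))"
    by (simp add: gadget_amp_def algebra_simps)
  then show ?thesis
    by (simp add: inv_sqrt2_sq)
qed

definition gadget_gram :: "nat \<Rightarrow> nat \<Rightarrow> complex" where
  "gadget_gram a b = cnj (gadget_amp a) * gadget_amp b"

lemma gadget_gram_diag_det: "gadget_gram 0 0 * gadget_gram 0 0 - gadget_gram 1 1 * gadget_gram 1 1 \<noteq> 0"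
proof -
  let ?w = "cnj omega"
  have "(1 + ?w) * (1 + omega) = 2 + omega + ?w"
    using cnj_omega_mult by (simp add: algebra_simps)
  then have P: "gadget_gram 0 0 = (2 + omega + ?w) / 4"
    unfolding gadget_gram_def gadget_amp_0 by simp
  have "?w * omega * ((1 - ?w) * (1 - omega)) = 2 - omega - ?w"
    using cnj_omega_mult by (simp add: algebra_simps)
  moreover have "gadget_gram 1 1 = ?w * omega * ((1 - ?w) * (1 - omega)) / 4"
    unfolding gadget_gram_def gadget_amp_1 by (simp add: algebra_simps)
  ultimately have Q: "gadget_gram 1 1 = (2 - omega - ?w) / 4"
    by simp
  have "gadget_gram 0 0 * gadget_gram 0 0 - gadget_gram 1 1 * gadget_gram 1 1 =
      (gadget_gram 0 0 - gadget_gram 1 1) * (gadget_gram 0 0 + gadget_gram 1 1)"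
    by (simp add: algebra_simps)
  also have "\<dots> = (omega + ?w) / 2"
    unfolding P Q by (simp add: field_simps)
  finally have det: "gadget_gram 0 0 * gadget_gram 0 0 - gadget_gram 1 1 * gadget_gram 1 1 = (omega + ?w) / 2" .
  show ?thesis
    unfolding det using omega_add_cnj_neq_0 by simp
qed

lemma gadget_gram_off_diag_det: "gadget_gram 0 1 * gadget_gram 0 1 - gadget_gram 1 0 * gadget_gram 1 0 \<noteq> 0"
proof -
  let ?w = "cnj omega"
  have w: "?w * omega = 1" "omega * omega = \<i>" "?w * ?w = - \<i>"
    using cnj_omega_mult omega_sq by (auto, metis complex_cnj_i complex_cnj_mult)
  have "(1 + ?w) * (omega * (1 - omega)) = omega - omega * omega + ?w * omega - ?w * omega * omega"
    by (simp add: algebra_simps)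
  then have Z: "gadget_gram 0 1 = (1 - \<i>) / 4"
    unfolding gadget_gram_def gadget_amp_0 gadget_amp_1 using w(1,2) by simp
  have "?w * (1 - ?w) * (1 + omega) = ?w + ?w * omega - ?w * ?w - ?w * (?w * omega)"
    by (simp add: algebra_simps)
  moreover have "gadget_gram 1 0 = ?w * (1 - ?w) * (1 + omega) / 4"
    unfolding gadget_gram_def gadget_amp_0 gadget_amp_1 by simp
  ultimately have W: "gadget_gram 1 0 = (1 + \<i>) / 4"
    using w(1,3) by simp
  have "gadget_gram 0 1 * gadget_gram 0 1 - gadget_gram 1 0 * gadget_gram 1 0 = - \<i> / 4"
    unfolding Z W by (simp add: field_simps algebra_simps)
  then show ?thesis
    by simp
qed

lemma cnj_gadget_col_mult:
  assumes "c < 4" "i < 2" "j < 2"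
  shows "cnj (gadget_col c i) * gadget_col c j =
    effect_entry (gadget_gram 0 0) (gadget_gram 1 1) (gadget_gram 0 1) (gadget_gram 1 0) c i j"
proof -
  have "cnj (gadget_col c i) * gadget_col c j = cnj inv_sqrt2 * inv_sqrt2 *
      ((-1)^(i * (c div 2)) * (-1)^(j * (c div 2))) * gadget_gram ((c + i) mod 2) ((c + j) mod 2)"
    unfolding gadget_col_def gadget_gram_def by (simp add: algebra_simps)
  also have "(-1::complex)^(i * (c div 2)) * (-1)^(j * (c div 2)) = (-1)^((i + j) * (c div 2))"
    by (simp add: power_add add_mult_distrib)
  also have "cnj inv_sqrt2 * inv_sqrt2 = 1/2"
    using inv_sqrt2_sq by (simp add: inv_sqrt2_def)
  finally have eq: "cnj (gadget_col c i) * gadget_col c j =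
      1/2 * (-1)^((i + j) * (c div 2)) * gadget_gram ((c + i) mod 2) ((c + j) mod 2)" .
  have "c \<in> {0,1,2,3}" "i \<in> {0,1}" "j \<in> {0,1}"
    using assms by auto
  then show ?thesis
    unfolding eq by (auto simp: effect_entry_def)
qed

definition gadget_dual :: "nat \<Rightarrow> nat \<Rightarrow> nat \<Rightarrow> complex" where
  "gadget_dual x y c =
    dual_num (gadget_gram 0 0) (gadget_gram 1 1) (gadget_gram 0 1) (gadget_gram 1 0) x y c /
    dual_det (gadget_gram 0 0) (gadget_gram 1 1) (gadget_gram 0 1) (gadget_gram 1 0) x y"

lemma gadget_dual_sum:
  assumes "x < 2" "y < 2" "i < 2" "j < 2"
  shows "(\<Sum>c<4. gadget_dual x y c * (cnj (gadget_col c i) * gadget_col c j)) =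
    (if i = x \<and> j = y then 1 else 0)"
proof -
  let ?P = "gadget_gram 0 0" and ?Q = "gadget_gram 1 1" and ?Z = "gadget_gram 0 1" and ?W = "gadget_gram 1 0"
  have "(\<Sum>c<4. gadget_dual x y c * (cnj (gadget_col c i) * gadget_col c j)) =
      (\<Sum>c<4. dual_num ?P ?Q ?Z ?W x y c / dual_det ?P ?Q ?Z ?W x y * effect_entry ?P ?Q ?Z ?W c i j)"
    by (intro sum.cong refl) (simp add: gadget_dual_def cnj_gadget_col_mult assms)
  also have "\<dots> = (if i = x \<and> j = y then 1 else 0)"
    by (rule dual_effect_entry_sum[OF gadget_gram_diag_det gadget_gram_off_diag_det assms])
  finally show ?thesis .
qed

lemma sum_mult_split: "(\<Sum>b<a * m. f b) = (\<Sum>h<a. \<Sum>l<m. f (h * m + l :: nat))"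
proof -
  have "(\<Sum>b<a * m. f b) = (\<Sum>h<a. \<Sum>b\<in>{h * m..<h * m + m}. f b)"
    using sum.nat_group[of f m a] by simp
  also have "\<dots> = (\<Sum>h<a. \<Sum>l<m. f (h * m + l))"
  proof (rule sum.cong[OF refl])
    fix h
    have "(\<Sum>b\<in>{0 + h * m..<m + h * m}. f b) = (\<Sum>l\<in>{0..<m}. f (l + h * m))"
      by (rule sum.shift_bounds_nat_ivl)
    then show "(\<Sum>b\<in>{h * m..<h * m + m}. f b) = (\<Sum>l<m. f (h * m + l))"
      by (simp add: add.commute atLeast0LessThan)
  qed
  finally show ?thesis .
qed

lemma sum_digits_prod:
  fixes G :: "nat \<Rightarrow> nat \<Rightarrow> nat \<Rightarrow> complex"
  shows "(\<Sum>h<2^n. \<Sum>l<2^n. \<Prod>j<n. G j (digit h j) (digit l j)) = (\<Prod>j<n. \<Sum>u<2. \<Sum>v<2. G j u v)"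
proof (induction n arbitrary: G)
  case (Suc n)
  define R where "R h l = (\<Prod>j<n. G (Suc j) (digit h j) (digit l j))" for h l
  have split: "(\<Sum>h<2^Suc n. g h) = (\<Sum>h<2^n. \<Sum>u<2. g (h * 2 + u))" for g :: "nat \<Rightarrow> complex"
    using sum_mult_split[of g "2^n" 2] by (simp add: mult.commute)
  have digits: "(\<Prod>j<Suc n. G j (digit (h * 2 + u) j) (digit (l * 2 + v) j)) = G 0 u v * R h l"
    if "u < 2" "v < 2" for h u l v
    unfolding prod.lessThan_Suc_shift using that by (simp add: digit_mult_2_add R_def)
  have "(\<Sum>h<2^Suc n. \<Sum>l<2^Suc n. \<Prod>j<Suc n. G j (digit h j) (digit l j)) =
      (\<Sum>h<2^n. \<Sum>u<2. \<Sum>l<2^n. \<Sum>v<2. G 0 u v * R h l)"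
    unfolding split by (intro sum.cong refl) (rule digits; simp)
  also have "\<dots> = (\<Sum>h<2^n. \<Sum>l<2^n. \<Sum>u<2. \<Sum>v<2. G 0 u v * R h l)"
    by (rule sum.cong[OF refl]) (rule sum.swap)
  also have "\<dots> = (\<Sum>u<2. \<Sum>v<2. G 0 u v) * (\<Sum>h<2^n. \<Sum>l<2^n. R h l)"
    by (simp only: sum_distrib_left sum_distrib_right)
  also have "(\<Sum>h<2^n. \<Sum>l<2^n. R h l) = (\<Prod>j<n. \<Sum>u<2. \<Sum>v<2. G (Suc j) u v)"
    unfolding R_def by (rule Suc.IH)
  finally show ?case
    by (simp only: prod.lessThan_Suc_shift)
qed simp

lemma sum_pair_digits_prod:
  fixes F :: "nat \<Rightarrow> nat \<Rightarrow> complex"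
  shows "(\<Sum>b<2^(n+n). \<Prod>j<n. F j (pair_digits n j b)) = (\<Prod>j<n. \<Sum>c<4. F j c)"
proof -
  have "(\<Sum>b<2^(n+n). \<Prod>j<n. F j (pair_digits n j b)) =
      (\<Sum>h<2^n. \<Sum>l<2^n. \<Prod>j<n. F j (pair_digits n j (h * 2^n + l)))"
    using sum_mult_split[of _ "2^n" "2^n"] by (simp add: power_add)
  also have "\<dots> = (\<Sum>h<2^n. \<Sum>l<2^n. \<Prod>j<n. F j (2 * digit h j + digit l j))"
    by (intro sum.cong prod.cong refl) (simp add: pair_digits_def digit_add_mult_pow)
  also have "\<dots> = (\<Prod>j<n. \<Sum>u<2. \<Sum>v<2. F j (2 * u + v))"
    by (rule sum_digits_prod)
  also have "\<dots> = (\<Prod>j<n. \<Sum>c<4. F j c)"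
    by (simp add: sum_lessThan_2 sum_lessThan_4 add.assoc)
  finally show ?thesis .
qed

context matrix_vs
begin

lemma index_finsum_mat:
  assumes "i < nr" "j < nc" "f \<in> A \<rightarrow> carrier_mat nr nc"
  shows "finsum V f A $$ (i,j) = (\<Sum>x\<in>A. f x $$ (i,j))"
  using assms(3)
proof (induct A rule: infinite_finite_induct)
  case (infinite A)
  then show ?case
    using assms(1,2) by (simp add: finsum_def finprod_def module_mat_simps)
next
  case empty
  then show ?case
    using assms(1,2) by simp
next
  case (insert x X)
  have f: "f \<in> X \<rightarrow> carrier_mat nr nc" "f x \<in> carrier_mat nr nc"
    using insert.prems by auto
  have "finsum V f (insert x X) = f x + finsum V f X"
    using finsum_insert[OF insert.hyps(1,2) f] by simp
  moreover have "finsum V f X \<in> carrier_mat nr nc"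
    using finsum_closed[OF f(1)] by simp
  then have "(f x + finsum V f X) $$ (i,j) = f x $$ (i,j) + finsum V f X $$ (i,j)"
    using assms(1,2) by simp
  ultimately show ?case
    using insert f by simp
qed

lemma index_lincomb:
  assumes "i < nr" "j < nc" "A \<subseteq> carrier_mat nr nc"
  shows "lincomb a A $$ (i,j) = (\<Sum>v\<in>A. a v * v $$ (i,j))"
proof -
  have "lincomb a A $$ (i,j) = (\<Sum>v\<in>A. (a v \<cdot>\<^sub>m v) $$ (i,j))"
    unfolding lincomb_def using assms by (subst index_finsum_mat) auto
  also have "\<dots> = (\<Sum>v\<in>A. a v * v $$ (i,j))"
    by (rule sum.cong[OF refl]) (use assms in \<open>auto simp: carrier_matD\<close>)
  finally show ?thesis .
qed

end

lemma carrier_mat_subset_span_if_dual: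
  fixes \<mu> :: "nat \<Rightarrow> complex mat" and \<gamma> :: "nat \<Rightarrow> nat \<Rightarrow> nat \<Rightarrow> complex"
  assumes \<mu>: "\<And>b. b < K \<Longrightarrow> \<mu> b \<in> carrier_mat d d"
    and dual: "\<And>I J X Y. I < d \<Longrightarrow> J < d \<Longrightarrow> X < d \<Longrightarrow> Y < d \<Longrightarrow>
      (\<Sum>b<K. \<gamma> I J b * \<mu> b $$ (X,Y)) = (if X = I \<and> Y = J then 1 else 0)"
  shows "carrier_mat d d \<subseteq> LinearCombinations.module.span class_ring (module_mat TYPE(complex) d d) (\<mu> ` {..<K})"
proof
  interpret V: matrix_vs d d "TYPE(complex)" .
  fix B :: "complex mat" assume B: "B \<in> carrier_mat d d"
  let ?M = "\<mu> ` {..<K}"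
  define cB where "cB b = (\<Sum>I<d. \<Sum>J<d. B $$ (I,J) * \<gamma> I J b)" for b
  define a where "a w = (\<Sum>b\<in>{b\<in>{..<K}. \<mu> b = w}. cB b)" for w
  have Mc: "?M \<subseteq> carrier_mat d d"
    using \<mu> by auto
  have "V.lincomb a ?M = B"
  proof (rule eq_matI)
    fix X Y assume "X < dim_row B" "Y < dim_col B"
    then have X: "X < d" and Y: "Y < d"
      using B by auto
    have "V.lincomb a ?M $$ (X,Y) = (\<Sum>w\<in>?M. \<Sum>b\<in>{b\<in>{..<K}. \<mu> b = w}. cB b * \<mu> b $$ (X,Y))"
      unfolding V.index_lincomb[OF X Y Mc] a_def sum_distrib_right by (intro sum.cong refl) auto
    also have "\<dots> = (\<Sum>b<K. cB b * \<mu> b $$ (X,Y))"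
      by (rule sum.image_gen[symmetric]) simp
    also have "\<dots> = (\<Sum>I<d. \<Sum>J<d. B $$ (I,J) * (\<Sum>b<K. \<gamma> I J b * \<mu> b $$ (X,Y)))"
      unfolding cB_def sum_distrib_right sum_distrib_left
      by (subst sum.swap) (subst (2) sum.swap, simp add: mult.assoc)
    also have "\<dots> = (\<Sum>I<d. \<Sum>J<d. B $$ (I,J) * (if X = I \<and> Y = J then 1 else 0))"
      by (intro sum.cong refl) (simp add: dual X Y)
    also have "\<dots> = (\<Sum>J<d. B $$ (X,J) * (if X = X \<and> Y = J then 1 else 0))"
      by (rule sum_lessThan_single[OF X]) (auto intro: sum.neutral)
    also have "\<dots> = B $$ (X,Y) * (if X = X \<and> Y = Y then 1 else 0)"
      by (rule sum_lessThan_single[OF Y]) auto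
    also have "\<dots> = B $$ (X,Y)"
      by simp
    finally show "V.lincomb a ?M $$ (X,Y) = B $$ (X,Y)" .
  qed (use V.lincomb_closed[OF Mc] B in auto)
  then show "B \<in> V.span ?M"
    unfolding V.span_def by force
qed

definition mat_unit :: "nat \<Rightarrow> nat \<Rightarrow> nat \<Rightarrow> complex mat" where
  "mat_unit d x y = mat d d (\<lambda>(i,j). if i = x \<and> j = y then 1 else 0)"

lemma mat_span_dim_eq_if_spans:
  assumes M: "M \<subseteq> carrier_mat d d" "finite M"
    and full: "carrier_mat d d \<subseteq> LinearCombinations.module.span class_ring (module_mat TYPE(complex) d d) M"
  shows "mat_span_dim d M = d * d"
proof -
  interpret V: matrix_vs d d "TYPE(complex)" .
  let ?e = "\<lambda>b. mat_unit d (b div d) (b mod d)"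
  define E where "E = ?e ` {..<d * d}"
  have E: "E \<subseteq> carrier_mat d d" "finite E"
    by (auto simp: E_def mat_unit_def)
  have E_unit: "\<exists>x<d. \<exists>y<d. w = mat_unit d x y" if w: "w \<in> E" for w
  proof -
    obtain b where b: "b < d * d" "w = ?e b"
      using w unfolding E_def by blast
    then have "0 < d"
      by (cases d) auto
    then have "b div d < d" "b mod d < d"
      using b by (auto simp: less_mult_imp_div_less)
    then show ?thesis
      using b by blast
  qed
  have index_mat_unit: "mat_unit d x' y' $$ (x,y) = (if x = x' \<and> y = y' then 1 else 0)"
    if "x < d" "y < d" for x y x' y'
    using that by (simp add: mat_unit_def)
  have span_M: "V.span M = carrier_mat d d"
    using V.span_is_subset2[OF M(1)] full by auto
  have "mat_span_dim d M = V.dim"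
    unfolding mat_span_dim_def span_M by (simp add: module_mat_def)
  moreover have fin_dim: "V.fin_dim"
    unfolding V.fin_dim_def using M span_M by auto
  have "carrier_mat d d \<subseteq> V.span E"
    unfolding E_def
  proof (rule carrier_mat_subset_span_if_dual[where \<gamma> = "\<lambda>I J b. if b = I * d + J then 1 else 0"])
    fix I J X Y assume IJ: "I < d" "J < d" and XY: "X < d" "Y < d"
    have "I * d + J < (I + 1) * d"
      using IJ by simp
    also have "\<dots> \<le> d * d"
      using IJ by (intro mult_right_mono) auto
    finally have "(\<Sum>b<d * d. (if b = I * d + J then 1 else 0) * ?e b $$ (X,Y)) =
        (if I * d + J = I * d + J then 1 else 0) * ?e (I * d + J) $$ (X,Y)"
      by (rule sum_lessThan_single) simp
    also have "\<dots> = mat_unit d I J $$ (X,Y)"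
      using IJ by simp
    finally show "(\<Sum>b<d * d. (if b = I * d + J then 1 else 0) * ?e b $$ (X,Y)) =
        (if X = I \<and> Y = J then 1 else 0)"
      using XY index_mat_unit by simp
  qed (simp add: mat_unit_def)
  then have "V.span E = carrier_mat d d"
    using V.span_is_subset2[OF E(1)] by auto
  then have "V.dim \<le> card E"
    using V.gen_ge_dim[OF E(2,1)] by simp
  moreover have "card E = d * d"
  proof -
    have "inj_on ?e {..<d * d}"
    proof (rule inj_onI)
      fix b b' assume b: "b \<in> {..<d * d}" "b' \<in> {..<d * d}" and eq: "?e b = ?e b'"
      then have d: "0 < d"
        by (cases d) auto
      have "?e b $$ (b div d, b mod d) = ?e b' $$ (b div d, b mod d)"
        using eq by simp
      then have "b div d = b' div d \<and> b mod d = b' mod d"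
        using b d by (simp add: index_mat_unit less_mult_imp_div_less split: if_splits)
      then show "b = b'"
        by (metis div_mult_mod_eq)
    qed
    then show ?thesis
      unfolding E_def by (simp add: card_image)
  qed
  moreover have "V.lin_indpt E"
  proof
    assume "V.lin_dep E"
    then obtain A a v where A: "finite A" "A \<subseteq> E" "V.lincomb a A = 0\<^sub>m d d" "v \<in> A" "a v \<noteq> 0"
      unfolding V.lin_dep_def by auto
    obtain x y where xy: "x < d" "y < d" "v = mat_unit d x y"
      using E_unit A(2,4) by blast
    have "V.lincomb a A $$ (x,y) = (\<Sum>w\<in>A. a w * w $$ (x,y))"
      using V.index_lincomb[OF xy(1,2)] A(2) E(1) by auto
    also have "\<dots> = a v * v $$ (x,y)"
    proof (rule sum.remove[OF A(1,4), THEN trans])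
      have "w $$ (x,y) = 0" if w: "w \<in> A - {v}" for w
      proof -
        obtain x' y' where "x' < d" "y' < d" "w = mat_unit d x' y'"
          using E_unit w A(2) by blast
        moreover have "w \<noteq> v"
          using w by auto
        ultimately show ?thesis
          using xy index_mat_unit by auto
      qed
      then show "a v * v $$ (x,y) + (\<Sum>w\<in>A - {v}. a w * w $$ (x,y)) = a v * v $$ (x,y)"
        by simp
    qed
    also have "\<dots> = a v"
      using xy index_mat_unit by simp
    finally show False
      using A(3,5) xy by simp
  qed
  then have "card E \<le> V.dim"
    using V.li_le_dim(2)[OF fin_dim E(1)] by simp
  ultimately show ?thesis
    by simp
qed

lemma index_povm_elem_zero_ancillas:
  assumes U: "circuit_mat (n+m) gs \<in> carrier_mat (2^(n+m)) (2^(n+m))" and b: "b < 2^(n+m)"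
    and X: "X < 2^n" and Y: "Y < 2^n"
  defines "\<mu> \<equiv> povm_elem n m (unit_vec (2^m) 0) gs (\<lambda>b. unit_vec (2^(n+m)) b) b"
  shows "\<mu> $$ (X,Y) = cnj (circuit_mat (n+m) gs $$ (b, X * 2^m)) * circuit_mat (n+m) gs $$ (b, Y * 2^m)"
    and "\<mu> \<in> carrier_mat (2^n) (2^n)"
proof -
  let ?U = "circuit_mat (n+m) gs" and ?N = "(2::nat)^(n+m)"
  define V where "V = adj ?U * ket (unit_vec ?N b)"
  define K where "K = kron (1\<^sub>m (2^n)) (ket (unit_vec (2^m) 0))"
  define W where "W = adj K * V"
  have \<mu>: "\<mu> = W * adj W"
    unfolding \<mu>_def povm_elem_def V_def K_def W_def Let_def ..
  have N: "?N = 2^n * 2^m"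
    by (simp add: power_add)
  have V_dims: "dim_row V = ?N" "dim_col V = 1"
    using U by (auto simp: V_def)
  have K_dims: "dim_row K = ?N" "dim_col K = 2^n"
    by (auto simp: K_def N)
  have W_dims: "dim_row W = 2^n" "dim_col W = 1"
    using K_dims V_dims by (auto simp: W_def)
  have V_index: "V $$ (i,0) = cnj (?U $$ (b,i))" if i: "i < ?N" for i
  proof -
    have "V $$ (i,0) = (\<Sum>k<?N. adj ?U $$ (i,k) * ket (unit_vec ?N b) $$ (k,0))"
      unfolding V_def using U i by (subst index_mult_mat_sum) auto
    also have "\<dots> = adj ?U $$ (i,b) * ket (unit_vec ?N b) $$ (b,0)"
      by (rule sum_lessThan_single[OF b]) (use U i b in auto)
    finally show ?thesis
      using U i b by simp
  qed
  have K_index: "K $$ (i, Z) = (if i = Z * 2^m then 1 else 0)" if i: "i < ?N" and Z: "Z < 2^n" for i Z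
  proof -
    have "K $$ (i, Z) = 1\<^sub>m (2^n) $$ (i div 2^m, Z) * ket (unit_vec (2^m) 0) $$ (i mod 2^m, 0)"
      unfolding K_def using i Z by (subst index_kron) (auto simp: N)
    also have "\<dots> = (if i div 2^m = Z then 1 else 0) * (if i mod 2^m = 0 then 1 else 0)"
      using i Z by (simp add: N less_mult_imp_div_less)
    finally show ?thesis
      by (auto simp: mult.commute)
  qed
  have W_index: "W $$ (Z,0) = cnj (?U $$ (b, Z * 2^m))" if Z: "Z < 2^n" for Z
  proof -
    have ZN: "Z * 2^m < ?N"
      using Z N by simp
    have "W $$ (Z,0) = (\<Sum>k<?N. adj K $$ (Z,k) * V $$ (k,0))"
      unfolding W_def using K_dims V_dims Z by (subst index_mult_mat_sum) auto
    also have "\<dots> = adj K $$ (Z, Z * 2^m) * V $$ (Z * 2^m, 0)"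
      by (rule sum_lessThan_single[OF ZN]) (use K_dims K_index Z in auto)
    finally show ?thesis
      using K_dims K_index[OF ZN Z] Z ZN V_index[OF ZN] by simp
  qed
  have "(W * adj W) $$ (X,Y) = (\<Sum>k<1. W $$ (X,k) * adj W $$ (k,Y))"
    using W_dims X Y by (subst index_mult_mat_sum) auto
  then show "\<mu> $$ (X,Y) = cnj (?U $$ (b, X * 2^m)) * ?U $$ (b, Y * 2^m)"
    unfolding \<mu> using W_dims X Y W_index[OF X] W_index[OF Y] by simp
  show "\<mu> \<in> carrier_mat (2^n) (2^n)"
    unfolding \<mu> using W_dims by auto
qed

section \<open>The group of Z-strings\<close>

definition z_string :: "bool list \<Rightarrow> complex mat" where
  "z_string bs = foldr kron (map (\<lambda>b. if b then pauli_Z else 1\<^sub>m 2) bs) (1\<^sub>m 1)"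

fun z_sign :: "bool list \<Rightarrow> nat \<Rightarrow> complex" where
  "z_sign [] x = 1"
| "z_sign (b # bs) x = (if b \<and> x div 2^length bs = 1 then -1 else 1) * z_sign bs (x mod 2^length bs)"

definition z_group :: "nat \<Rightarrow> complex mat set" where
  "z_group N = z_string ` {bs. length bs = N}"

lemma mat_diag_dims [simp]: "dim_row (mat_diag n f) = n" "dim_col (mat_diag n f) = n"
  by (simp_all add: mat_diag_def)

lemma index_mat_diag [simp]: "i < n \<Longrightarrow> j < n \<Longrightarrow> mat_diag n f $$ (i,j) = (if i = j then f i else 0)"
  by (simp add: mat_diag_def)

lemma index_mat_diag_mult_vec:
  assumes "v \<in> carrier_vec n" "i < n"
  shows "(mat_diag n f *\<^sub>v v) $ i = f i * v $ i"
proof -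
  have "(mat_diag n f *\<^sub>v v) $ i = (\<Sum>k<n. mat_diag n f $$ (i,k) * v $ k)"
    using assms by (simp add: scalar_prod_def atLeast0LessThan)
  also have "\<dots> = mat_diag n f $$ (i,i) * v $ i"
    by (rule sum_lessThan_single[OF assms(2)]) (use assms(2) in auto)
  finally show ?thesis
    using assms(2) by simp
qed

lemma kron_mat_diag:
  assumes "0 < D"
  shows "kron (mat_diag 2 p) (mat_diag D q) = mat_diag (2 * D) (\<lambda>x. p (x div D) * q (x mod D))"
proof (rule eq_matI)
  fix x y assume "x < dim_row (mat_diag (2 * D) (\<lambda>x. p (x div D) * q (x mod D)))"
    "y < dim_col (mat_diag (2 * D) (\<lambda>x. p (x div D) * q (x mod D)))"
  then have x: "x < 2 * D" and y: "y < 2 * D"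
    by simp_all
  have "x div D < 2" "y div D < 2"
    using x y assms by (auto simp: less_mult_imp_div_less mult.commute)
  moreover have "x mod D < D" "y mod D < D"
    using assms by simp_all
  moreover have "x div D = y div D \<and> x mod D = y mod D \<longleftrightarrow> x = y"
    by (metis div_mult_mod_eq)
  ultimately show "kron (mat_diag 2 p) (mat_diag D q) $$ (x, y) =
      mat_diag (2 * D) (\<lambda>x. p (x div D) * q (x mod D)) $$ (x, y)"
    using x y by (auto simp: index_kron)
qed simp_all

lemma z_string_mat_diag: "z_string bs = mat_diag (2^length bs) (z_sign bs)"
proof (induction bs)
  case Nil
  then show ?case
    by (auto simp: z_string_def intro!: eq_matI)
next
  case (Cons b bs)
  have factor: "(if b then pauli_Z else 1\<^sub>m 2) = mat_diag 2 (\<lambda>i. if b \<and> i = 1 then -1 else 1)"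
    by (rule eq_matI) (auto simp: pauli_Z_def mat_of_rows_list_def less_2_cases_iff)
  have "z_string (b # bs) = kron (if b then pauli_Z else 1\<^sub>m 2) (z_string bs)"
    by (simp add: z_string_def)
  also have "\<dots> = mat_diag (2 * 2^length bs)
      (\<lambda>x. (if b \<and> x div 2^length bs = 1 then -1 else 1) * z_sign bs (x mod 2^length bs))"
    unfolding factor Cons by (rule kron_mat_diag) simp
  finally show ?case
    by simp
qed

lemma z_string_carrier_mat: "z_string bs \<in> carrier_mat (2^length bs) (2^length bs)"
  by (simp add: z_string_mat_diag)

lemma z_sign_0: "z_sign bs 0 = 1"
  by (induction bs) auto

lemma z_sign_xor: "length bs = length cs \<Longrightarrow> z_sign (map2 (\<noteq>) bs cs) x = z_sign bs x * z_sign cs x"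
proof (induction bs arbitrary: cs x)
  case (Cons b bs)
  then obtain c cs' where "cs = c # cs'" "length bs = length cs'"
    by (cases cs) auto
  then show ?case
    using Cons.IH by auto
qed simp

lemma z_string_mult:
  assumes "length bs = length cs"
  shows "z_string bs * z_string cs = z_string (map2 (\<noteq>) bs cs)"
proof -
  have "z_sign (map2 (\<noteq>) bs cs) = (\<lambda>i. z_sign bs i * z_sign cs i)"
    using z_sign_xor[OF assms] by (intro ext) simp
  moreover have "length (map2 (\<noteq>) bs cs) = length bs"
    using assms by simp
  ultimately show ?thesis
    using assms by (simp add: z_string_mat_diag)
qed

lemma z_sign_replicate_False: "z_sign (replicate N False) = (\<lambda>_. 1)"
proof
  show "z_sign (replicate N False) x = 1" for x
    by (induction N arbitrary: x) auto
qed

lemma z_string_replicate_False: "z_string (replicate N False) = 1\<^sub>m (2^N)"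
  by (simp add: z_string_mat_diag z_sign_replicate_False)

lemma z_sign_inj:
  "length bs = length cs \<Longrightarrow> (\<forall>x<2^length bs. z_sign bs x = z_sign cs x) \<Longrightarrow> bs = cs"
proof (induction bs arbitrary: cs)
  case (Cons b bs)
  then obtain c cs' where cs: "cs = c # cs'" "length bs = length cs'"
    by (cases cs) auto
  let ?D = "2^length bs :: nat"
  have eq: "z_sign (b # bs) x = z_sign (c # cs') x" if "x < 2 * ?D" for x
    using Cons.prems(2) that cs by simp
  have "(if b then -1 else 1) = (if c then -1 else (1::complex))"
    using eq[of ?D] cs(2)[symmetric] by (simp add: z_sign_0)
  then have "b = c"
    by (auto split: if_splits)
  moreover have "\<forall>x<?D. z_sign bs x = z_sign cs' x"
  proof (intro allI impI)
    fix x assume x: "x < ?D"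
    then have "z_sign (b # bs) x = z_sign (c # cs') x"
      by (intro eq) simp
    then show "z_sign bs x = z_sign cs' x"
      using x cs(2)[symmetric] \<open>b = c\<close> by simp
  qed
  ultimately show ?case
    using Cons.IH[OF cs(2)] cs by simp
qed simp

lemma inj_on_z_string: "inj_on z_string {bs. length bs = N}"
proof (rule inj_onI)
  fix bs cs assume bs: "bs \<in> {bs. length bs = N}" and cs: "cs \<in> {bs. length bs = N}"
    and eq: "z_string bs = z_string cs"
  have "\<forall>x<2^length bs. z_sign bs x = z_sign cs x"
  proof (intro allI impI)
    fix x :: nat assume x: "x < 2^length bs"
    have "z_string bs $$ (x,x) = z_string cs $$ (x,x)"
      using eq by simp
    then show "z_sign bs x = z_sign cs x"
      using x bs cs by (simp add: z_string_mat_diag)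
  qed
  then show "bs = cs"
    using z_sign_inj bs cs by auto
qed

lemma stabilizer_group_z_group: "stabilizer_group N (z_group N)"
  unfolding stabilizer_group_def
proof (intro conjI ballI)
  show "z_group N \<subseteq> pauli_group N"
  proof
    fix M assume "M \<in> z_group N"
    then obtain bs where bs: "length bs = N" "M = z_string bs"
      by (auto simp: z_group_def)
    let ?Ps = "map (\<lambda>b. if b then pauli_Z else 1\<^sub>m 2) bs"
    have "(1::complex) \<cdot>\<^sub>m M = M"
      by (rule eq_matI) simp_all
    then have "M = (\<i> ^ 0) \<cdot>\<^sub>m foldr kron ?Ps (1\<^sub>m 1)"
      using bs by (simp add: z_string_def)
    moreover have "length ?Ps = N \<and> set ?Ps \<subseteq> {1\<^sub>m 2, pauli_X, pauli_Y, pauli_Z}"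
      using bs by auto
    ultimately show "M \<in> pauli_group N"
      unfolding pauli_group_def by blast
  qed
  show "1\<^sub>m (2^N) \<in> z_group N"
    unfolding z_group_def
    by (rule image_eqI[where x = "replicate N False"]) (simp_all add: z_string_replicate_False)
  fix a b assume "a \<in> z_group N" "b \<in> z_group N"
  then obtain as bs where as: "length as = N" "a = z_string as" and bs: "length bs = N" "b = z_string bs"
    by (auto simp: z_group_def)
  show "a * b \<in> z_group N"
    unfolding z_group_def as bs z_string_mult[OF as(1)[folded bs(1)]] using as bs by auto
  show "a * b = b * a"
    unfolding as bs z_string_mat_diag using as bs by (simp add: mult.commute)
next
  fix a assume a: "a \<in> z_group N"
  then obtain as where as: "length as = N" "a = z_string as"
    by (auto simp: z_group_def)
  have "map2 (\<noteq>) as as = replicate N False"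
    using as(1) by (induction as arbitrary: N) auto
  then have "a * a = 1\<^sub>m (2^N)"
    unfolding as(2) using z_string_mult[of as as] z_string_replicate_False[of N] by simp
  then show "\<exists>b\<in>z_group N. a * b = 1\<^sub>m (2^N)"
    using a by blast
next
  show "(-1) \<cdot>\<^sub>m 1\<^sub>m (2^N) \<notin> z_group N"
  proof
    assume "(-1) \<cdot>\<^sub>m 1\<^sub>m (2^N) \<in> z_group N"
    then obtain bs where bs: "length bs = N" "(-1) \<cdot>\<^sub>m 1\<^sub>m (2^N) = z_string bs"
      by (auto simp: z_group_def)
    then have "((-1) \<cdot>\<^sub>m 1\<^sub>m (2^N) :: complex mat) $$ (0,0) = z_string bs $$ (0,0)"
      by simp
    then show False
      using bs(1) by (simp add: z_string_mat_diag z_sign_0)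
  qed
  have "card (z_group N) = card {bs :: bool list. set bs \<subseteq> UNIV \<and> length bs = N}"
    unfolding z_group_def by (simp add: card_image[OF inj_on_z_string])
  also have "\<dots> = 2^N"
    by (subst card_lists_length_eq) simp_all
  finally show "card (z_group N) = 2^N" .
qed

text \<open>Every basis index other than 0 is flipped by some Z-string; this is why the zero state
  is the only state fixed by the whole group.\<close>

lemma ex_z_sign_neg: "i < 2^N \<Longrightarrow> i \<noteq> 0 \<Longrightarrow> \<exists>bs. length bs = N \<and> z_sign bs i = -1"
proof (induction N arbitrary: i)
  case (Suc N)
  show ?case
  proof (cases "i div 2^N = 1")
    case True
    have "z_sign (True # replicate N False) i = -1"
      using True by (simp add: z_sign_replicate_False)
    then show ?thesis
      by (metis length_Cons length_replicate)
  next
    case False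
    have "i div 2^N < 2"
      using Suc.prems(1) by (simp add: less_mult_imp_div_less mult.commute)
    then have "i div 2^N = 0"
      using False by simp
    then have i: "i < 2^N"
      by (simp add: div_eq_0_iff)
    obtain bs where bs: "length bs = N" "z_sign bs i = -1"
      using Suc.IH[OF i Suc.prems(2)] by blast
    then have "length (False # bs) = Suc N \<and> z_sign (False # bs) i = -1"
      using i by simp
    then show ?thesis
      by blast
  qed
qed simp

lemma cinner_unit_vec:
  assumes "b < D" "b' < D"
  shows "cinner (unit_vec D b) (unit_vec D b') = (if b = b' then 1 else 0)"
proof -
  have "cinner (unit_vec D b) (unit_vec D b') = cnj (unit_vec D b $ b) * unit_vec D b' $ b"
    unfolding cinner_def by (simp, rule sum_lessThan_single[OF assms(1)]) (use assms in auto)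
  then show ?thesis
    using assms by simp
qed

lemma is_state_unit_vec: "b < 2^N \<Longrightarrow> is_state N (unit_vec (2^N) b)"
  unfolding is_state_def using cinner_unit_vec[of b "2^N" b] by simp

lemma z_string_mult_unit_vec:
  assumes "length bs = N" "b < 2^N"
  shows "z_string bs *\<^sub>v unit_vec (2^N) b = z_sign bs b \<cdot>\<^sub>v unit_vec (2^N) b"
  using assms by (auto simp: z_string_mat_diag index_mat_diag_mult_vec intro!: eq_vecI)

lemma stabilizer_state_unit_vec_0: "stabilizer_state N (unit_vec (2^N) 0)"
  unfolding stabilizer_state_def
proof (intro conjI exI[of _ "z_group N"] ballI)
  show "is_state N (unit_vec (2^N) 0)"
    by (rule is_state_unit_vec) simp
  show "stabilizer_group N (z_group N)"
    by (rule stabilizer_group_z_group)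
  fix v :: "complex vec" assume v: "v \<in> carrier_vec (2^N)"
  have z_v: "(z_string bs *\<^sub>v v) $ i = z_sign bs i * v $ i" if "length bs = N" "i < 2^N" for bs i
    unfolding z_string_mat_diag that(1) by (rule index_mat_diag_mult_vec[OF v that(2)])
  show "(\<forall>g\<in>z_group N. g *\<^sub>v v = v) \<longleftrightarrow> (\<exists>c. v = c \<cdot>\<^sub>v unit_vec (2^N) 0)"
  proof
    assume fixed: "\<forall>g\<in>z_group N. g *\<^sub>v v = v"
    have "v = v $ 0 \<cdot>\<^sub>v unit_vec (2^N) 0"
    proof (rule eq_vecI)
      fix i assume "i < dim_vec (v $ 0 \<cdot>\<^sub>v unit_vec (2^N) 0)"
      then have i: "i < 2^N"
        by simp
      show "v $ i = (v $ 0 \<cdot>\<^sub>v unit_vec (2^N) 0) $ i"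
      proof (cases "i = 0")
        case False
        obtain bs where bs: "length bs = N" "z_sign bs i = -1"
          using ex_z_sign_neg[OF i False] by blast
        then have "z_string bs \<in> z_group N"
          by (auto simp: z_group_def)
        then have "v $ i = - v $ i"
          using fixed z_v[OF bs(1) i] bs(2) by auto
        then show ?thesis
          using i False by simp
      qed (use i in simp)
    qed (use v in simp)
    then show "\<exists>c. v = c \<cdot>\<^sub>v unit_vec (2^N) 0"
      by blast
  next
    assume "\<exists>c. v = c \<cdot>\<^sub>v unit_vec (2^N) 0"
    then obtain c where c: "v = c \<cdot>\<^sub>v unit_vec (2^N) 0"
      by blast
    show "\<forall>g\<in>z_group N. g *\<^sub>v v = v"
    proof
      fix g assume "g \<in> z_group N"
      then obtain bs where bs: "length bs = N" "g = z_string bs"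
        by (auto simp: z_group_def)
      have "z_string bs *\<^sub>v v = c \<cdot>\<^sub>v (z_string bs *\<^sub>v unit_vec (2^N) 0)"
        unfolding c using z_string_carrier_mat[of bs] bs(1) by (intro mult_mat_vec) auto
      then show "g *\<^sub>v v = v"
        using z_string_mult_unit_vec[OF bs(1)] bs(2) c by (simp add: z_sign_0)
    qed
  qed
qed

lemma stabilizer_basis_unit_vecs: "stabilizer_basis N (\<lambda>b. unit_vec (2^N) b)"
  unfolding stabilizer_basis_def
proof (intro conjI exI[of _ "z_group N"] allI impI ballI)
  show "stabilizer_group N (z_group N)"
    by (rule stabilizer_group_z_group)
  fix b :: nat assume b: "b < 2^N"
  show "is_state N (unit_vec (2^N) b)"
    by (rule is_state_unit_vec[OF b])
  fix g assume "g \<in> z_group N"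
  then show "\<exists>c. g *\<^sub>v unit_vec (2^N) b = c \<cdot>\<^sub>v unit_vec (2^N) b"
    using z_string_mult_unit_vec[OF _ b] by (auto simp: z_group_def)
next
  fix b b' :: nat assume "b < 2^N" "b' < 2^N" "b \<noteq> b'"
  then show "cinner (unit_vec (2^N) b) (unit_vec (2^N) b') = 0"
    using cinner_unit_vec by simp
qed

definition ic_circuit :: "nat \<Rightarrow> nat \<Rightarrow> gate list" where
  "ic_circuit n r = lift_circuit n (padded_gadget r) n"

definition ic_povm :: "nat \<Rightarrow> nat \<Rightarrow> nat \<Rightarrow> complex mat" where
  "ic_povm n r = povm_elem n n (unit_vec (2^n) 0) (ic_circuit n r) (\<lambda>b. unit_vec (2^(n+n)) b)"

lemma circuit_mat_ic_circuit:
  "circuit_mat (n+n) (ic_circuit n r) =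
    pair_tensor n (\<lambda>j. if j < n then circuit_mat 2 (padded_gadget r j) else 1\<^sub>m 4)"
  unfolding ic_circuit_def using gate_ok_padded_gadget by (blast intro: circuit_mat_lift_circuit)

lemma index_ic_circuit_ancilla_0:
  assumes b: "b < 2^(n+n)" and X: "X < 2^n"
  shows "circuit_mat (n+n) (ic_circuit n r) $$ (b, X * 2^n) = (\<Prod>j<n. gadget_col (pair_digits n j b) (digit X j))"
proof -
  have "X * 2^n < 2^(n+n)"
    using X by (simp add: power_add)
  then have "circuit_mat (n+n) (ic_circuit n r) $$ (b, X * 2^n) =
      (\<Prod>j<n. (if j < n then circuit_mat 2 (padded_gadget r j) else 1\<^sub>m 4) $$
        (pair_digits n j b, pair_digits n j (X * 2^n)))"
    unfolding circuit_mat_ic_circuit by (rule index_pair_tensor[OF b])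
  also have "\<dots> = (\<Prod>j<n. gadget_col (pair_digits n j b) (digit X j))"
  proof (rule prod.cong[OF refl])
    fix j assume "j \<in> {..<n}"
    then have j: "j < n"
      by simp
    have "pair_digits n j (X * 2^n) = 2 * digit X j"
      using digit_add_mult_pow[of 0 n j X] j by (simp add: pair_digits_def digit_def)
    then show "(if j < n then circuit_mat 2 (padded_gadget r j) else 1\<^sub>m 4) $$
        (pair_digits n j b, pair_digits n j (X * 2^n)) = gadget_col (pair_digits n j b) (digit X j)"
      using j index_padded_gadget[OF pair_digits_less_4 digit_less_2] by simp
  qed
  finally show ?thesis .
qed

lemma ic_povm_carrier_mat: "b < 2^(n+n) \<Longrightarrow> ic_povm n r b \<in> carrier_mat (2^n) (2^n)"
  unfolding ic_povm_def
  by (rule index_povm_elem_zero_ancillas(2)[where X = 0 and Y = 0]) (auto simp: circuit_mat_ic_circuit)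

lemma index_ic_povm:
  assumes b: "b < 2^(n+n)" and X: "X < 2^n" and Y: "Y < 2^n"
  shows "ic_povm n r b $$ (X,Y) =
    (\<Prod>j<n. cnj (gadget_col (pair_digits n j b) (digit X j)) * gadget_col (pair_digits n j b) (digit Y j))"
proof -
  have "ic_povm n r b $$ (X,Y) = cnj (circuit_mat (n+n) (ic_circuit n r) $$ (b, X * 2^n)) *
      circuit_mat (n+n) (ic_circuit n r) $$ (b, Y * 2^n)"
    unfolding ic_povm_def by (rule index_povm_elem_zero_ancillas(1)[OF _ b X Y]) (simp add: circuit_mat_ic_circuit)
  then show ?thesis
    by (simp add: index_ic_circuit_ancilla_0 b X Y cnj_prod prod.distrib)
qed

lemma ic_povm_dual_sum:
  assumes I: "I < 2^n" and J: "J < 2^n" and X: "X < 2^n" and Y: "Y < 2^n"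
  shows "(\<Sum>b<2^(n+n). (\<Prod>j<n. gadget_dual (digit I j) (digit J j) (pair_digits n j b)) * ic_povm n r b $$ (X,Y)) =
    (if X = I \<and> Y = J then 1 else 0)"
proof -
  have "(\<Sum>b<2^(n+n). (\<Prod>j<n. gadget_dual (digit I j) (digit J j) (pair_digits n j b)) * ic_povm n r b $$ (X,Y)) =
      (\<Sum>b<2^(n+n). \<Prod>j<n. gadget_dual (digit I j) (digit J j) (pair_digits n j b) *
        (cnj (gadget_col (pair_digits n j b) (digit X j)) * gadget_col (pair_digits n j b) (digit Y j)))"
    by (intro sum.cong refl) (simp add: index_ic_povm X Y prod.distrib)
  also have "\<dots> = (\<Prod>j<n. \<Sum>c<4. gadget_dual (digit I j) (digit J j) c *
      (cnj (gadget_col c (digit X j)) * gadget_col c (digit Y j)))"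
    by (rule sum_pair_digits_prod[of "\<lambda>j c. gadget_dual (digit I j) (digit J j) c *
        (cnj (gadget_col c (digit X j)) * gadget_col c (digit Y j))" n])
  also have "\<dots> = (\<Prod>j<n. if digit X j = digit I j \<and> digit Y j = digit J j then 1 else 0)"
    by (intro prod.cong refl) (rule gadget_dual_sum; simp)
  also have "\<dots> = (if X = I \<and> Y = J then 1 else 0)"
  proof -
    have "(\<forall>j<n. digit X j = digit I j \<and> digit Y j = digit J j) \<longleftrightarrow> X = I \<and> Y = J"
      unfolding nat_eq_iff_digits_eq[OF X I] nat_eq_iff_digits_eq[OF Y J] by auto
    then show ?thesis
      by (simp only: prod_indicator)
  qed
  finally show ?thesis .
qed

lemma informationally_complete_ic_povm: "informationally_complete n (ic_povm n r) (2^(n+n))"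
proof -
  let ?M = "ic_povm n r ` {..<2^(n+n)}"
  have "carrier_mat (2^n) (2^n) \<subseteq>
      LinearCombinations.module.span class_ring (module_mat TYPE(complex) (2^n) (2^n)) ?M"
  proof (rule carrier_mat_subset_span_if_dual)
    show "ic_povm n r b \<in> carrier_mat (2^n) (2^n)" if "b < 2^(n+n)" for b
      using that by (rule ic_povm_carrier_mat)
    show "(\<Sum>b<2^(n+n). (\<Prod>j<n. gadget_dual (digit I j) (digit J j) (pair_digits n j b)) *
        ic_povm n r b $$ (X,Y)) = (if X = I \<and> Y = J then 1 else 0)"
      if "I < 2^n" "J < 2^n" "X < 2^n" "Y < 2^n" for I J X Y
      using that by (rule ic_povm_dual_sum)
  qed
  then have "mat_span_dim (2^n) ?M = 2^n * 2^n"
    by (intro mat_span_dim_eq_if_spans) (auto simp: ic_povm_carrier_mat)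
  then show ?thesis
    unfolding informationally_complete_def by (simp add: power_mult_distrib[symmetric])
qed

lemma t_doped_povm_ic_povm:
  assumes "n \<ge> 1"
  shows "t_doped_povm n (r + 2 * n) (ic_povm n r) (2^(n+n))"
  unfolding t_doped_povm_def
proof (intro exI[of _ n] exI[of _ "unit_vec (2^n) 0"] exI[of _ "ic_circuit n r"]
    exI[of _ "\<lambda>b. unit_vec (2^(n+n)) b"] conjI)
  show "stabilizer_state n (unit_vec (2^n) 0)"
    by (rule stabilizer_state_unit_vec_0)
  show "stabilizer_basis (n+n) (\<lambda>b. unit_vec (2^(n+n)) b)"
    by (rule stabilizer_basis_unit_vecs)
  show "\<forall>g\<in>set (ic_circuit n r). gate_ok (n+n) g"
    unfolding ic_circuit_def by (rule gate_ok_lift_circuit[OF gate_ok_padded_gadget]) simp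
  have "t_count (ic_circuit n r) = (\<Sum>j<n. (if j = 0 then r else 0) + 2)"
    unfolding ic_circuit_def t_count_lift_circuit t_count_padded_gadget ..
  also have "\<dots> = (\<Sum>j<n. if j = 0 then r else 0) + (\<Sum>j<n. 2)"
    by (rule sum.distrib)
  finally show "t_count (ic_circuit n r) = r + 2 * n"
    using assms by simp
qed (simp_all add: ic_povm_def)

theorem theorem5:
  fixes n t :: nat
  assumes "n \<ge> 1" and "t \<ge> 2 * n"
  shows "\<exists>\<mu> K. t_doped_povm n t \<mu> K \<and> informationally_complete n \<mu> K"
proof -
  have "t_doped_povm n t (ic_povm n (t - 2 * n)) (2^(n+n))"
    using t_doped_povm_ic_povm[OF assms(1), of "t - 2 * n"] assms(2) by simp
  then show ?thesis
    using informationally_complete_ic_povm by blast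
qed

end
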